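(* Let $\boldsymbol t=(\boldsymbol u,\boldsymbol v)\in M$, $\overline{\boldsymbol\psi}=(\boldsymbol u,\theta_v(\boldsymbol t))$, and $\overline{\boldsymbol \theta}=\theta(\boldsymbol t)$. Then $\nabla_{\boldsymbol\psi} \ell(\overline{\boldsymbol\psi};\boldsymbol t)=\nabla_{\boldsymbol\psi} \check{\ell}(\overline{\boldsymbol\psi};\boldsymbol t)=\boldsymbol 0$ and $$ \nabla^2_{\boldsymbol\psi}\ell(\overline{\boldsymbol\psi};\boldsymbol t)\;=\;\nabla^2_{\boldsymbol\psi}\check{\ell}(\overline{\boldsymbol\psi};\boldsymbol t)\;=\;-\begin{bmatrix} {\rm var}(\boldsymbol u)^{-1} & \boldsymbol 0\\ \boldsymbol 0 & ({\rm var}(\boldsymbol t)^{vv})^{-1} \end{bmatrix}, $$ where ${\rm var}(\boldsymbol t)^{vv}$ stands for the $\boldsymbol v\boldsymbol v$-block of ${\rm var}(\boldsymbol t)^{-1}$ and the variance is computed with respect to $P_{\overline{\boldsymbol \theta}}$.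
   Context: Let $\mathcal{E}$ be a minimally represented regular exponential family with canonical parameter $\boldsymbol\theta\in\Theta$, cumulant function $A$, mean parameter $\boldsymbol\mu=\mu(\boldsymbol\theta)=\nabla A(\boldsymbol\theta)\in M$ and inverse map $\theta(\boldsymbol\mu)$. Split the sufficient statistic as $\boldsymbol t=(\boldsymbol u,\boldsymbol v)$ and use the mixed parametrization $\boldsymbol\psi=(\boldsymbol\mu_u,\boldsymbol\theta_v)$; $\theta_v(\boldsymbol\mu)$ denotes the $\boldsymbol v$-component of $\theta(\boldsymbol\mu)$. The log-likelihood is $\ell(\boldsymbol\theta;\boldsymbol t)=\langle\boldsymbol\theta,\boldsymbol t\rangle-A(\boldsymbol\theta)$ and, for fixed canonical parameter $\overline{\boldsymbol\theta}$, the dual log-likelihood is $\check\ell(\boldsymbol\mu;\overline{\boldsymbol\theta})=\langle\overline{\boldsymbol\theta},\boldsymbol\mu\rangle-A^*(\boldsymbol\mu)$ with $A^*$ the Fenchel conjugate of $A$; both are viewed as functions of the mixed parameter $\boldsymbol\psi$. In the expression $\check{\ell}(\boldsymbol\psi;\boldsymbol t)$ the fixed canonical parameter is $\overline{\boldsymbol\theta}=\theta(\boldsymbol t)$. *)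

theory Defs
  imports "HOL-Probability.Probability"
begin

text \<open>An exponential family is given by a base measure nu on the space of sufficient
statistics R^n (n indexed by a finite type), with densities exp(<theta,t> - A theta).
The sufficient statistic is split t = (u,v) by indexing R^n with the sum type 'p + 'q:
coordinates Inl i form u, coordinates Inr j form v.\<close>

definition nat_param_space :: "(real^'n) measure \<Rightarrow> (real^'n) set" where
  "nat_param_space \<nu> = {\<theta>. (\<integral>\<^sup>+ t. ennreal (exp (\<theta> \<bullet> t)) \<partial>\<nu>) < \<infinity>}"

definition cumulant :: "(real^'n) measure \<Rightarrow> real^'n \<Rightarrow> real" where
  "cumulant \<nu> \<theta> = ln (enn2real (\<integral>\<^sup>+ t. ennreal (exp (\<theta> \<bullet> t)) \<partial>\<nu>))"

definition ef_density :: "(real^'n) measure \<Rightarrow> real^'n \<Rightarrow> real^'n \<Rightarrow> real" where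
  "ef_density \<nu> \<theta> t = exp (\<theta> \<bullet> t - cumulant \<nu> \<theta>)"

definition mean_param :: "(real^'n) measure \<Rightarrow> real^'n \<Rightarrow> real^'n" where
  "mean_param \<nu> \<theta> = (\<chi> i. \<integral> t. t $ i * ef_density \<nu> \<theta> t \<partial>\<nu>)"

definition var_matrix :: "(real^'n) measure \<Rightarrow> real^'n \<Rightarrow> real^'n^'n" where
  "var_matrix \<nu> \<theta> = (\<chi> i j. \<integral> t. (t $ i - mean_param \<nu> \<theta> $ i) * (t $ j - mean_param \<nu> \<theta> $ j)
                                * ef_density \<nu> \<theta> t \<partial>\<nu>)"

definition mean_space :: "(real^'n) measure \<Rightarrow> (real^'n) set" where
  "mean_space \<nu> = mean_param \<nu> ` nat_param_space \<nu>"

definition canon_of_mean :: "(real^'n) measure \<Rightarrow> real^'n \<Rightarrow> real^'n" where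
  "canon_of_mean \<nu> \<mu> = (THE \<theta>. \<theta> \<in> nat_param_space \<nu> \<and> mean_param \<nu> \<theta> = \<mu>)"

definition regular_ef :: "(real^'n) measure \<Rightarrow> bool" where
  "regular_ef \<nu> \<longleftrightarrow> sets \<nu> = sets borel \<and> nat_param_space \<nu> \<noteq> {} \<and> open (nat_param_space \<nu>)"

definition minimal_ef :: "(real^'n) measure \<Rightarrow> bool" where
  "minimal_ef \<nu> \<longleftrightarrow> (\<forall>a c. (AE t in \<nu>. a \<bullet> t = c) \<longrightarrow> a = 0)"

text \<open>Fenchel conjugate of A (A = +infinity outside the natural parameter space).\<close>
definition fenchel_conj :: "(real^'n) measure \<Rightarrow> real^'n \<Rightarrow> real" where
  "fenchel_conj \<nu> \<mu> = (SUP \<theta>\<in>nat_param_space \<nu>. \<theta> \<bullet> \<mu> - cumulant \<nu> \<theta>)"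

text \<open>Mixed parametrization psi = (mu_u, theta_v) mapped back to the canonical parameter.\<close>
definition mixed_to_canon :: "(real^('p::finite+'q::finite)) measure \<Rightarrow> real^('p+'q) \<Rightarrow> real^('p+'q)" where
  "mixed_to_canon \<nu> \<psi> = (THE \<theta>. \<theta> \<in> nat_param_space \<nu> \<and>
      (\<forall>i. mean_param \<nu> \<theta> $ Inl i = \<psi> $ Inl i) \<and> (\<forall>j. \<theta> $ Inr j = \<psi> $ Inr j))"

definition loglik :: "(real^'n) measure \<Rightarrow> real^'n \<Rightarrow> real^'n \<Rightarrow> real" where
  "loglik \<nu> \<theta> t = \<theta> \<bullet> t - cumulant \<nu> \<theta>"

definition dual_loglik :: "(real^'n) measure \<Rightarrow> real^'n \<Rightarrow> real^'n \<Rightarrow> real" where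
  "dual_loglik \<nu> \<theta>bar \<mu> = \<theta>bar \<bullet> \<mu> - fenchel_conj \<nu> \<mu>"

definition mixed_loglik :: "(real^('p::finite+'q::finite)) measure \<Rightarrow> real^('p+'q) \<Rightarrow> real^('p+'q) \<Rightarrow> real" where
  "mixed_loglik \<nu> \<psi> t = loglik \<nu> (mixed_to_canon \<nu> \<psi>) t"

definition mixed_dual_loglik :: "(real^('p::finite+'q::finite)) measure \<Rightarrow> real^('p+'q) \<Rightarrow> real^('p+'q) \<Rightarrow> real" where
  "mixed_dual_loglik \<nu> \<psi> t = dual_loglik \<nu> (canon_of_mean \<nu> t) (mean_param \<nu> (mixed_to_canon \<nu> \<psi>))"

definition has_grad_hess :: "(real^'n \<Rightarrow> real) \<Rightarrow> real^'n \<Rightarrow> real^'n \<Rightarrow> real^'n^'n \<Rightarrow> bool" where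
  "has_grad_hess f x g H \<longleftrightarrow> (\<exists>G. (\<forall>\<^sub>F y in nhds x. (f has_derivative (\<lambda>h. G y \<bullet> h)) (at y))
       \<and> G x = g \<and> (G has_derivative (\<lambda>h. H *v h)) (at x))"

definition uu_block :: "real^('p::finite+'q::finite)^('p+'q) \<Rightarrow> real^'p^'p" where
  "uu_block M = (\<chi> i j. M $ Inl i $ Inl j)"

definition vv_block :: "real^('p::finite+'q::finite)^('p+'q) \<Rightarrow> real^'q^'q" where
  "vv_block M = (\<chi> i j. M $ Inr i $ Inr j)"

definition block_diag :: "real^'p::finite^'p \<Rightarrow> real^'q::finite^'q \<Rightarrow> real^('p+'q)^('p+'q)" where
  "block_diag P Q = (\<chi> k l. case (k, l) of (Inl i, Inl j) \<Rightarrow> P $ i $ j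
                                         | (Inr i, Inr j) \<Rightarrow> Q $ i $ j
                                         | _ \<Rightarrow> 0)"

end

theory Submission
  imports Defs
begin

text \<open>
  In the mixed parametrization \<open>\<psi> = \<Phi>(\<theta>) = (\<mu>\<^sub>u(\<theta>), \<theta>\<^sub>v)\<close> the Jacobian of \<open>\<Phi>\<close> is
  \<open>L = [V\<^sub>u\<^sub>u V\<^sub>u\<^sub>v; 0 I]\<close>, where \<open>V = var(t)\<close> is the Jacobian of \<open>\<mu>\<close>. As functions of
  \<open>\<theta> = \<Phi>\<^sup>-\<^sup>1(\<psi>)\<close> the two log-likelihoods have the gradients \<open>t - \<mu>(\<theta>)\<close> and
  \<open>V(\<theta>) (\<theta>bar - \<theta>)\<close>, which vanish at \<open>\<theta>bar\<close>. By the chain rule their \<open>\<psi>\<close>-gradients are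
  of the form \<open>w(\<psi>)\<^sup>T B(\<psi>)\<close> with \<open>w(\<psi>bar) = 0\<close>, so at \<open>\<psi>bar\<close> only the derivative of \<open>w\<close>
  contributes and both Hessians equal \<open>-J\<^sup>T V J\<close> with \<open>J = L\<^sup>-\<^sup>1\<close>. The block factorization
  \<open>V = L\<^sup>T diag(V\<^sub>u\<^sub>u\<^sup>-\<^sup>1, S) L\<close>, where \<open>S = ((V\<^sup>-\<^sup>1)\<^sub>v\<^sub>v)\<^sup>-\<^sup>1\<close> is the Schur
  complement of \<open>V\<^sub>u\<^sub>u\<close>, makes \<open>J\<^sup>T V J\<close> block diagonal.

  The analytic input: differentiation under the integral sign gives \<open>A' = \<mu>\<close> and \<open>\<mu>' = V\<close>
  on the open natural parameter space; minimality makes \<open>A\<close> strictly convex (Gibbs' inequality)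
  and \<open>V\<close> positive definite, so \<open>\<Phi>\<close> is injective and, by invariance of domain, maps the
  natural parameter space onto an open set on which its inverse is differentiable.
\<close>

lemma has_derivative_vec_componentwise:
  fixes f :: "'a::real_normed_vector \<Rightarrow> real^'m"
  assumes "\<And>i. ((\<lambda>x. f x $ i) has_derivative (\<lambda>h. f' h $ i)) (at a)"
  shows "(f has_derivative f') (at a)"
  using assms by (subst has_derivative_componentwise_within) (auto simp: Basis_vec_def inner_axis)

lemma has_derivative_quadratic_remainder:
  fixes f :: "'a::real_normed_vector \<Rightarrow> 'b::real_normed_vector"
  assumes "bounded_linear D" and "d > 0"
    and remainder: "\<And>h. norm h < d \<Longrightarrow> norm (f (x + h) - f x - D h) \<le> C * (norm h)\<^sup>2"
  shows "(f has_derivative D) (at x)"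
  unfolding has_derivative_at
proof (intro conjI \<open>bounded_linear D\<close>)
  have "\<forall>\<^sub>F h in at 0. norm h < d"
    using \<open>d > 0\<close> by (intro eventually_at_in_open' [THEN eventually_mono, of "ball 0 d"]) auto
  then have "\<forall>\<^sub>F h in at 0. norm (norm (f (x + h) - f x - D h) / norm h) \<le> C * norm h"
  proof (rule eventually_mono)
    fix h :: 'a assume "norm h < d"
    then have "norm (f (x + h) - f x - D h) / norm h \<le> C * (norm h)\<^sup>2 / norm h"
      using remainder by (intro divide_right_mono) auto
    then show "norm (norm (f (x + h) - f x - D h) / norm h) \<le> C * norm h"
      by (cases "h = 0") (simp_all add: power2_eq_square)
  qed
  moreover have "((\<lambda>h. C * norm h) \<longlongrightarrow> 0) (at (0::'a))"
    by (intro tendsto_mult_right_zero tendsto_norm_zero tendsto_ident_at)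
  ultimately show "(\<lambda>h. norm (f (x + h) - f x - D h) / norm h) \<midarrow>0\<rightarrow> 0"
    by (rule Lim_null_comparison)
qed

lemma has_derivative_bilinear_vanishing:
  fixes f :: "'a::real_normed_vector \<Rightarrow> 'b::real_normed_vector"
    and g :: "'a \<Rightarrow> 'c::real_normed_vector" and prod :: "'b \<Rightarrow> 'c \<Rightarrow> 'd::real_normed_vector"
  assumes prod: "bounded_bilinear prod"
    and f: "(f has_derivative f') (at x)" and "f x = 0" and g: "isCont g x"
  shows "((\<lambda>y. prod (f y) (g y)) has_derivative (\<lambda>h. prod (f' h) (g x))) (at x)"
  unfolding has_derivative_at
proof (intro conjI)
  interpret prod: bounded_bilinear prod by (rule prod)
  have lin: "bounded_linear f'" using f by (rule has_derivative_bounded_linear)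
  show "bounded_linear (\<lambda>h. prod (f' h) (g x))"
    using bounded_linear_compose[OF prod.bounded_linear_left lin] .
  obtain K where K: "\<And>a b. norm (prod a b) \<le> norm a * norm b * K" and "K > 0"
    using prod.pos_bounded by blast
  obtain L where L: "\<And>h. norm (f' h) \<le> norm h * L"
    using bounded_linear.bounded[OF lin] by blast
  define r where "r h = norm (f (x + h) - f x - f' h) / norm h" for h
  define b where "b h = K * (r h * norm (g (x + h)) + L * norm (g (x + h) - g x))" for h
  have "(r \<longlongrightarrow> 0) (at 0)" using f unfolding has_derivative_at r_def by blast
  moreover have "((\<lambda>h. g (x + h)) \<longlongrightarrow> g x) (at 0)" using g by (simp add: isCont_iff)
  ultimately have "(b \<longlongrightarrow> K * (0 * norm (g x) + L * norm (g x - g x))) (at 0)"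
    unfolding b_def by (intro tendsto_intros)
  then have b0: "(b \<longlongrightarrow> 0) (at 0)" by simp
  have bound: "norm (norm (prod (f (x + h)) (g (x + h)) - prod (f x) (g x) - prod (f' h) (g x))
      / norm h) \<le> b h" for h
  proof -
    have "prod (f (x + h)) (g (x + h)) - prod (f x) (g x) - prod (f' h) (g x)
        = prod (f (x + h) - f x - f' h) (g (x + h)) + prod (f' h) (g (x + h) - g x)"
      using \<open>f x = 0\<close> by (simp add: prod.diff_left prod.diff_right prod.zero_left)
    also have "norm \<dots> \<le> norm (f (x + h) - f x - f' h) * norm (g (x + h)) * K
        + norm h * L * norm (g (x + h) - g x) * K"
      using \<open>K > 0\<close>
      by (intro order_trans[OF norm_triangle_ineq add_mono[OF K order_trans[OF K]]]
          mult_right_mono L) auto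
    finally show ?thesis
      by (cases "h = 0") (auto simp: b_def r_def field_simps)
  qed
  show "(\<lambda>h. norm (prod (f (x + h)) (g (x + h)) - prod (f x) (g x) - prod (f' h) (g x))
      / norm h) \<midarrow>0\<rightarrow> 0"
    by (rule Lim_null_comparison[OF always_eventually[OF allI[OF bound]] b0])
qed

lemma matrix_inv_right: "invertible A \<Longrightarrow> A ** matrix_inv A = mat 1"
  and matrix_inv_left: "invertible A \<Longrightarrow> matrix_inv A ** A = mat 1"
  unfolding invertible_def matrix_inv_def by (metis (mono_tags, lifting) someI_ex)+

lemma matrix_inv_unique:
  fixes A B :: "'a::field^'n^'n"
  assumes "A ** B = mat 1"
  shows "matrix_inv A = B"
proof -
  have inv: "invertible A" using assms invertible_right_inverse by blast
  have "matrix_inv A = (matrix_inv A ** A) ** B"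
    by (simp add: assms flip: matrix_mul_assoc)
  then show ?thesis by (simp add: matrix_inv_left[OF inv])
qed

lemma matrix_inv_cancel:
  fixes A :: "'a::field^'n^'n"
  assumes "invertible A"
  shows "A *v (matrix_inv A *v x) = x" "matrix_inv A *v (A *v x) = x"
  by (simp_all add: matrix_vector_mul_assoc matrix_inv_right[OF assms] matrix_inv_left[OF assms])

lemma matrix_vector_mult_uminus_right: "A *v (- x) = - (A *v x)"
  and matrix_vector_mult_uminus_left: "(- A) *v x = - (A *v x)"
  for A :: "'a::comm_ring_1^'n^'m"
  by (simp_all add: matrix_vector_mult_def vec_eq_iff sum_negf)

lemma invertible_iff_kernel_trivial:
  fixes A :: "'a::field^'n^'n"
  shows "invertible A \<longleftrightarrow> (\<forall>x. A *v x = 0 \<longrightarrow> x = 0)"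
  by (simp add: invertible_left_inverse matrix_left_invertible_ker)

lemma matrix_inv_cramer:
  fixes A :: "real^'n^'n"
  assumes "det A \<noteq> 0"
  shows "matrix_inv A = (\<chi> k l. det (\<chi> i j. if j = k then axis l 1 $ i else A $ i $ j) / det A)"
proof -
  have inv: "invertible A" using assms invertible_det_nz by blast
  have column: "(M *v axis l 1) $ k = M $ k $ l" for M :: "real^'n^'n" and k l
    by (simp add: matrix_vector_mult_def axis_def if_distrib cong: if_cong)
  have "matrix_inv A *v axis l 1
      = (\<chi> k. det (\<chi> i j. if j = k then axis l 1 $ i else A $ i $ j) / det A)" for l
    using cramer[OF assms] matrix_inv_cancel(1)[OF inv] by blast
  then show ?thesis
    by (simp add: vec_eq_iff) (metis column vec_lambda_beta)
qed

lemma tendsto_det: "(F \<longlongrightarrow> A) net \<Longrightarrow> ((\<lambda>y. det (F y)) \<longlongrightarrow> det A) net"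
  for F :: "'a \<Rightarrow> real^'n^'n"
  unfolding det_def by (intro tendsto_intros)

lemma tendsto_matrix_inv:
  fixes F :: "'a \<Rightarrow> real^'n^'n"
  assumes F: "(F \<longlongrightarrow> A) net" and "invertible A"
  shows "((\<lambda>y. matrix_inv (F y)) \<longlongrightarrow> matrix_inv A) net"
proof -
  have det: "det A \<noteq> 0" using \<open>invertible A\<close> invertible_det_nz by blast
  define C where "C B = (\<chi> k l. det (\<chi> i j. if j = k then axis l 1 $ i else B $ i $ j) / det B)"
    for B :: "real^'n^'n"
  have entries: "((\<lambda>y. if j = k then c else F y $ i $ j) \<longlongrightarrow> (if j = k then c else A $ i $ j)) net"
    for i j k c
    using tendsto_vec_nth[OF tendsto_vec_nth[OF F]] by (cases "j = k") auto
  have "((\<lambda>y. C (F y)) \<longlongrightarrow> C A) net"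
    unfolding C_def by (intro tendsto_vec_lambda tendsto_divide tendsto_det entries F det)
  moreover have "\<forall>\<^sub>F y in net. C (F y) = matrix_inv (F y)"
    using tendsto_imp_eventually_ne[OF tendsto_det[OF F] det]
    by eventually_elim (simp add: C_def matrix_inv_cramer)
  ultimately show ?thesis
    using Lim_transform_eventually by (fastforce simp: C_def matrix_inv_cramer[OF det])
qed

lemma tendsto_matrix_mult:
  "(F \<longlongrightarrow> A) net \<Longrightarrow> (G \<longlongrightarrow> B) net \<Longrightarrow> ((\<lambda>y. F y ** G y) \<longlongrightarrow> A ** B) net"
  for F :: "'a \<Rightarrow> real^'n^'m" and G :: "'a \<Rightarrow> real^'k^'n"
  unfolding matrix_matrix_mult_def
  by (intro tendsto_vec_lambda tendsto_sum tendsto_mult tendsto_vec_nth)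

lemma bounded_bilinear_vector_matrix_mult:
  "bounded_bilinear (\<lambda>(x::real^'m) (A::real^'n^'m). x v* A)"
  unfolding bilinear_conv_bounded_bilinear[symmetric] bilinear_def
  by (auto intro!: linearI simp: vector_matrix_left_distrib vector_matrix_mult_add_rdistrib
      scaleR_vector_matrix_assoc vector_scaleR_matrix_ac)

lemma has_grad_hess_critical_point:
  fixes f :: "real^'n \<Rightarrow> real" and w :: "real^'n \<Rightarrow> real^'m" and B :: "real^'n \<Rightarrow> real^'n^'m"
  assumes "open U" "x \<in> U"
    and grad: "\<And>y. y \<in> U \<Longrightarrow> (f has_derivative (\<lambda>h. (w y v* B y) \<bullet> h)) (at y)"
    and w: "(w has_derivative w') (at x)" "w x = 0" and B: "isCont B x"
    and H: "\<And>h. w' h v* B x = H *v h"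
  shows "has_grad_hess f x 0 H"
  unfolding has_grad_hess_def
proof (intro exI[of _ "\<lambda>y. w y v* B y"] conjI)
  show "\<forall>\<^sub>F y in nhds x. (f has_derivative (\<lambda>h. (w y v* B y) \<bullet> h)) (at y)"
    using \<open>open U\<close> \<open>x \<in> U\<close> grad by (auto simp: eventually_nhds)
  show "w x v* B x = 0" using \<open>w x = 0\<close> by simp
  show "((\<lambda>y. w y v* B y) has_derivative (\<lambda>h. H *v h)) (at x)"
    using has_derivative_bilinear_vanishing[OF bounded_bilinear_vector_matrix_mult w B]
    by (simp add: H)
qed

section \<open>Block matrices\<close>

lemma sum_UNIV_sum_type:
  fixes f :: "('p::finite + 'q::finite) \<Rightarrow> 'a::comm_monoid_add"
  shows "(\<Sum>k\<in>UNIV. f k) = (\<Sum>i\<in>UNIV. f (Inl i)) + (\<Sum>j\<in>UNIV. f (Inr j))"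
  by (simp add: sum.Plus flip: UNIV_Plus_UNIV)

definition u_part :: "real^('p::finite + 'q::finite) \<Rightarrow> real^'p" where
  "u_part x = (\<chi> i. x $ Inl i)"

definition v_part :: "real^('p::finite + 'q::finite) \<Rightarrow> real^'q" where
  "v_part x = (\<chi> j. x $ Inr j)"

definition join_uv :: "real^'p::finite \<Rightarrow> real^'q::finite \<Rightarrow> real^('p + 'q)" where
  "join_uv a b = (\<chi> k. case k of Inl i \<Rightarrow> a $ i | Inr j \<Rightarrow> b $ j)"

definition uv_block :: "real^('p::finite + 'q::finite)^('p + 'q) \<Rightarrow> real^'q^'p" where
  "uv_block M = (\<chi> i j. M $ Inl i $ Inr j)"

definition vu_block :: "real^('p::finite + 'q::finite)^('p + 'q) \<Rightarrow> real^'p^'q" where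
  "vu_block M = (\<chi> i j. M $ Inr i $ Inl j)"

text \<open>The Jacobian \<open>[V\<^sub>u\<^sub>u V\<^sub>u\<^sub>v; 0 I]\<close> of \<open>\<theta> \<mapsto> (\<mu>\<^sub>u(\<theta>), \<theta>\<^sub>v)\<close> when \<open>V\<close> is the
  Jacobian of \<open>\<mu>\<close>.\<close>

definition mixed_jacobian ::
    "real^('p::finite + 'q::finite)^('p + 'q) \<Rightarrow> real^('p + 'q)^('p + 'q)" where
  "mixed_jacobian V = (\<chi> k. case k of Inl i \<Rightarrow> V $ Inl i | Inr j \<Rightarrow> axis (Inr j) 1)"

lemma u_part_join [simp]: "u_part (join_uv a b) = a"
  and v_part_join [simp]: "v_part (join_uv a b) = b"
  by (simp_all add: u_part_def v_part_def join_uv_def vec_eq_iff)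

lemma u_part_zero [simp]: "u_part 0 = 0"
  and v_part_zero [simp]: "v_part 0 = 0"
  by (simp_all add: u_part_def v_part_def vec_eq_iff)

lemma vec_eq_iff_parts: "x = y \<longleftrightarrow> u_part x = u_part y \<and> v_part x = v_part y"
  by (auto simp: u_part_def v_part_def vec_eq_iff) (metis sum.exhaust)

lemma inner_parts: "x \<bullet> y = u_part x \<bullet> u_part y + v_part x \<bullet> v_part y"
  by (simp add: inner_vec_def sum_UNIV_sum_type u_part_def v_part_def)

lemma u_part_mult: "u_part (A *v x) = uu_block A *v u_part x + uv_block A *v v_part x"
  and v_part_mult: "v_part (A *v x) = vu_block A *v u_part x + vv_block A *v v_part x"
  by (simp_all add: vec_eq_iff u_part_def v_part_def uu_block_def uv_block_def vu_block_def
      vv_block_def matrix_vector_mult_def sum_UNIV_sum_type)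

lemma mixed_jacobian_mult_Inl: "(mixed_jacobian V *v x) $ Inl i = (V *v x) $ Inl i"
  and mixed_jacobian_mult_Inr: "(mixed_jacobian V *v x) $ Inr j = x $ Inr j"
  by (simp_all add: mixed_jacobian_def matrix_vector_mul_component inner_axis')

lemma u_part_mixed_jacobian: "u_part (mixed_jacobian V *v x) = u_part (V *v x)"
  and v_part_mixed_jacobian: "v_part (mixed_jacobian V *v x) = v_part x"
  by (simp_all add: vec_eq_iff u_part_def v_part_def mixed_jacobian_mult_Inl
      mixed_jacobian_mult_Inr)

lemma tendsto_mixed_jacobian:
  "(F \<longlongrightarrow> V) net \<Longrightarrow> ((\<lambda>y. mixed_jacobian (F y)) \<longlongrightarrow> mixed_jacobian V) net"
  unfolding mixed_jacobian_def
  by (intro tendsto_vec_lambda) (auto split: sum.split intro: tendsto_vec_nth)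

lemma u_part_vector_mixed_jacobian: "u_part (z v* mixed_jacobian V) = u_part z v* uu_block V"
  and v_part_vector_mixed_jacobian:
    "v_part (z v* mixed_jacobian V) = u_part z v* uv_block V + v_part z"
  by (simp_all add: vec_eq_iff u_part_def v_part_def mixed_jacobian_def vector_matrix_mult_def
      sum_UNIV_sum_type uu_block_def uv_block_def axis_def mult_if_delta
      mult.commute[of _ "if _ then _ else _"])

lemma u_part_block_diag: "u_part (block_diag P Q *v y) = P *v u_part y"
  and v_part_block_diag: "v_part (block_diag P Q *v y) = Q *v v_part y"
  by (simp_all add: vec_eq_iff u_part_def v_part_def block_diag_def matrix_vector_mult_def
      sum_UNIV_sum_type)

locale spd_block_matrix =
  fixes V :: "real^('p::finite + 'q::finite)^('p + 'q)"
  assumes symmetric: "transpose V = V"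
    and pos_def: "\<And>x. x \<noteq> 0 \<Longrightarrow> 0 < x \<bullet> (V *v x)"
begin

lemma quadratic_form_eq_0_imp: "x \<bullet> (V *v x) = 0 \<Longrightarrow> x = 0"
  using pos_def[of x] by (cases "x = 0") auto

lemma invertible: "invertible V"
  unfolding invertible_iff_kernel_trivial by (metis inner_zero_right quadratic_form_eq_0_imp)

lemma invertible_uu_block: "invertible (uu_block V)"
  unfolding invertible_iff_kernel_trivial
proof (intro allI impI)
  fix a assume "uu_block V *v a = 0"
  then have "join_uv a 0 \<bullet> (V *v join_uv a 0) = 0"
    by (simp add: inner_parts u_part_mult)
  then have "join_uv a (0::real^'q) = 0" by (rule quadratic_form_eq_0_imp)
  then show "a = 0" using u_part_join[of a "0::real^'q"] by simp
qed

lemma invertible_mixed_jacobian: "invertible (mixed_jacobian V)"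
  unfolding invertible_iff_kernel_trivial
proof (intro allI impI)
  fix x assume x: "mixed_jacobian V *v x = 0"
  have "u_part (V *v x) = 0" and "v_part x = 0"
    using u_part_mixed_jacobian[of V x] v_part_mixed_jacobian[of V x] by (simp_all add: x)
  then have "x \<bullet> (V *v x) = 0" by (simp add: inner_parts[of x])
  then show "x = 0" by (rule quadratic_form_eq_0_imp)
qed

lemma uu_block_transpose: "transpose (uu_block V) = uu_block V"
  and uv_block_transpose: "transpose (uv_block V) = vu_block V"
  using symmetric by (simp_all add: vec_eq_iff transpose_def uu_block_def uv_block_def vu_block_def)

lemma vector_uu_block: "w v* uu_block V = uu_block V *v w"
  and vector_uv_block: "w v* uv_block V = vu_block V *v w"
  using transpose_matrix_vector[of "uu_block V" w] transpose_matrix_vector[of "uv_block V" w]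
  by (simp_all only: uu_block_transpose uv_block_transpose)

definition schur_compl :: "real^'q^'q" where
  "schur_compl = vv_block V - vu_block V ** matrix_inv (uu_block V) ** uv_block V"

lemma matrix_inv_vv_block_matrix_inv: "matrix_inv (vv_block (matrix_inv V)) = schur_compl"
proof (rule matrix_inv_unique)
  let ?P = "matrix_inv (uu_block V)"
  have "(schur_compl ** vv_block (matrix_inv V)) *v y = y" for y
  proof -
    define x where "x = matrix_inv V *v join_uv 0 y"
    have Vx: "V *v x = join_uv 0 y" unfolding x_def by (rule matrix_inv_cancel(1)[OF invertible])
    have u: "uu_block V *v u_part x + uv_block V *v v_part x = 0"
      using arg_cong[OF Vx, of u_part] by (simp only: u_part_mult u_part_join)
    have v: "vu_block V *v u_part x + vv_block V *v v_part x = y"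
      using arg_cong[OF Vx, of v_part] by (simp only: v_part_mult v_part_join)
    have "u_part x = ?P *v (uu_block V *v u_part x)"
      by (simp only: matrix_inv_cancel(2)[OF invertible_uu_block])
    also have "uu_block V *v u_part x = uv_block V *v (- v_part x)"
      using u by (simp add: matrix_vector_mult_uminus_right eq_neg_iff_add_eq_0)
    finally have "u_part x = - (?P *v (uv_block V *v v_part x))"
      by (simp only: matrix_vector_mult_uminus_right)
    then have "schur_compl *v v_part x = y"
      using v by (simp add: schur_compl_def matrix_vector_mult_diff_rdistrib matrix_vector_mul_assoc
          matrix_mul_assoc matrix_vector_mult_uminus_right)
    moreover have "v_part x = vv_block (matrix_inv V) *v y"
      by (simp add: x_def v_part_mult)
    ultimately show ?thesis by (simp add: matrix_vector_mul_assoc[symmetric])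
  qed
  then have "schur_compl ** vv_block (matrix_inv V) = mat 1"
    by (simp add: matrix_eq)
  then show "vv_block (matrix_inv V) ** schur_compl = mat 1"
    by (rule matrix_left_right_inverse[THEN iffD1])
qed

lemma block_ldl:
  "transpose (mixed_jacobian V) ** block_diag (matrix_inv (uu_block V)) schur_compl
     ** mixed_jacobian V = V"
proof (subst matrix_eq, intro allI)
  fix x :: "real^('p + 'q)"
  let ?L = "mixed_jacobian V" and ?P = "matrix_inv (uu_block V)"
  let ?D = "block_diag ?P schur_compl" and ?R = "vu_block V ** ?P ** uv_block V"
  define z where "z = ?D *v (?L *v x)"
  have Pz: "?P *v u_part (?L *v x) = u_part x + ?P *v (uv_block V *v v_part x)"
    unfolding u_part_mixed_jacobian unfolding u_part_mult
    by (simp add: matrix_vector_right_distrib matrix_inv_cancel(2)[OF invertible_uu_block])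
  have "u_part (z v* ?L) = (?P *v u_part (?L *v x)) v* uu_block V"
    by (simp only: z_def u_part_vector_mixed_jacobian u_part_block_diag)
  also have "\<dots> = uu_block V *v (?P *v u_part (?L *v x))"
    by (rule vector_uu_block)
  also have "\<dots> = u_part (V *v x)"
    by (simp add: matrix_inv_cancel(1)[OF invertible_uu_block] u_part_mixed_jacobian)
  finally have u: "u_part (z v* ?L) = u_part (V *v x)" .
  have "v_part (z v* ?L) = (?P *v u_part (?L *v x)) v* uv_block V + schur_compl *v v_part x"
    by (simp only: z_def v_part_vector_mixed_jacobian u_part_block_diag v_part_block_diag
        v_part_mixed_jacobian)
  also have "\<dots> = vu_block V *v (u_part x + ?P *v (uv_block V *v v_part x))
      + schur_compl *v v_part x"
    by (simp only: Pz vector_uv_block)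
  also have "\<dots> = vu_block V *v u_part x + ?R *v v_part x
      + (vv_block V *v v_part x - ?R *v v_part x)"
    by (simp only: schur_compl_def matrix_vector_right_distrib matrix_vector_mult_diff_rdistrib
        matrix_vector_mul_assoc matrix_mul_assoc)
  also have "\<dots> = v_part (V *v x)"
    by (simp add: v_part_mult)
  finally have v: "v_part (z v* ?L) = v_part (V *v x)" .
  have "(transpose ?L ** ?D ** ?L) *v x = z v* ?L"
    by (simp add: z_def flip: matrix_vector_mul_assoc)
  with u v show "(transpose ?L ** ?D ** ?L) *v x = V *v x"
    by (simp add: vec_eq_iff_parts[of _ "V *v x"])
qed

lemma mixed_jacobian_congruence:
  "transpose (matrix_inv (mixed_jacobian V)) ** V ** matrix_inv (mixed_jacobian V)
     = block_diag (matrix_inv (uu_block V)) (matrix_inv (vv_block (matrix_inv V)))"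
proof -
  let ?L = "mixed_jacobian V" and ?D = "block_diag (matrix_inv (uu_block V)) schur_compl"
  have "transpose (matrix_inv ?L) ** V ** matrix_inv ?L
      = transpose (?L ** matrix_inv ?L) ** ?D ** (?L ** matrix_inv ?L)"
    by (subst (2) block_ldl[symmetric]) (simp add: matrix_transpose_mul matrix_mul_assoc)
  then show ?thesis
    by (simp add: matrix_inv_right[OF invertible_mixed_jacobian] matrix_inv_vv_block_matrix_inv)
qed

end

section \<open>Integrals against exponential weights\<close>

definition poly_bounded :: "('a::real_normed_vector \<Rightarrow> real) \<Rightarrow> bool" where
  "poly_bounded g \<longleftrightarrow> (\<exists>C k. \<forall>t. \<bar>g t\<bar> \<le> C * (1 + norm t) ^ k)"

lemma poly_boundedI: "(\<And>t. \<bar>g t\<bar> \<le> C * (1 + norm t) ^ k) \<Longrightarrow> poly_bounded g"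
  unfolding poly_bounded_def by blast

lemma poly_bounded_const: "poly_bounded (\<lambda>_. c)"
  by (rule poly_boundedI[where C = "\<bar>c\<bar>" and k = 0]) simp

lemma poly_bounded_component: "poly_bounded (\<lambda>t::real^'n. t $ i)"
proof (rule poly_boundedI[where C = 1 and k = 1])
  show "\<bar>t $ i\<bar> \<le> 1 * (1 + norm t) ^ 1" for t :: "real^'n"
    using component_le_norm_cart[of t i] by simp
qed

lemma poly_bounded_inner: "poly_bounded (\<lambda>t. a \<bullet> t)"
proof (rule poly_boundedI[where C = "norm a" and k = 1])
  fix t
  have "\<bar>a \<bullet> t\<bar> \<le> norm a * norm t" by (rule Cauchy_Schwarz_ineq2)
  also have "\<dots> \<le> norm a * (1 + norm t)" by (intro mult_left_mono) auto
  finally show "\<bar>a \<bullet> t\<bar> \<le> norm a * (1 + norm t) ^ 1" by simp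
qed

lemma poly_bounded_mult:
  assumes "poly_bounded f" "poly_bounded g"
  shows "poly_bounded (\<lambda>t. f t * g t)"
proof -
  obtain C k where f: "\<And>t. \<bar>f t\<bar> \<le> C * (1 + norm t) ^ k"
    using assms(1) unfolding poly_bounded_def by blast
  obtain D l where g: "\<And>t. \<bar>g t\<bar> \<le> D * (1 + norm t) ^ l"
    using assms(2) unfolding poly_bounded_def by blast
  show ?thesis
  proof (rule poly_boundedI[where C = "C * D" and k = "k + l"])
    fix t
    have "\<bar>f t\<bar> * \<bar>g t\<bar> \<le> C * (1 + norm t) ^ k * (D * (1 + norm t) ^ l)"
      using f g by (intro mult_mono) (simp_all add: order_trans[OF abs_ge_zero f])
    then show "\<bar>f t * g t\<bar> \<le> C * D * (1 + norm t) ^ (k + l)"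
      by (simp add: abs_mult power_add mult_ac)
  qed
qed

lemma poly_bounded_diff:
  assumes "poly_bounded f" "poly_bounded g"
  shows "poly_bounded (\<lambda>t. f t - g t)"
proof -
  obtain C k where f: "\<And>t. \<bar>f t\<bar> \<le> C * (1 + norm t) ^ k"
    using assms(1) unfolding poly_bounded_def by blast
  obtain D l where g: "\<And>t. \<bar>g t\<bar> \<le> D * (1 + norm t) ^ l"
    using assms(2) unfolding poly_bounded_def by blast
  show ?thesis
  proof (rule poly_boundedI[where C = "\<bar>C\<bar> + \<bar>D\<bar>" and k = "k + l"])
    fix t :: 'a
    have "(1 + norm t) ^ k \<le> (1 + norm t) ^ (k + l)" and "(1 + norm t) ^ l \<le> (1 + norm t) ^ (k + l)"
      by (intro power_increasing; simp)+
    then have "C * (1 + norm t) ^ k \<le> \<bar>C\<bar> * (1 + norm t) ^ (k + l)"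
      and "D * (1 + norm t) ^ l \<le> \<bar>D\<bar> * (1 + norm t) ^ (k + l)"
      by (intro mult_mono; simp)+
    with f[of t] g[of t] show "\<bar>f t - g t\<bar> \<le> (\<bar>C\<bar> + \<bar>D\<bar>) * (1 + norm t) ^ (k + l)"
      by (simp add: distrib_right)
  qed
qed

lemma borel_measurable_sets_eq_borel:
  "sets \<nu> = sets borel \<Longrightarrow> f \<in> borel_measurable borel \<Longrightarrow> f \<in> borel_measurable \<nu>"
  using measurable_cong_sets by blast

lemma integrable_exp_inner:
  assumes "sets \<nu> = sets borel" and "\<theta> \<in> nat_param_space \<nu>"
  shows "integrable \<nu> (\<lambda>t. exp (\<theta> \<bullet> t))"
proof (rule integrableI_bounded)
  show "(\<lambda>t. exp (\<theta> \<bullet> t)) \<in> borel_measurable \<nu>"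
    by (rule borel_measurable_sets_eq_borel[OF assms(1)])
      (intro borel_measurable_continuous_onI continuous_intros)
  show "(\<integral>\<^sup>+ t. ennreal (norm (exp (\<theta> \<bullet> t))) \<partial>\<nu>) < \<infinity>"
    using assms(2) by (simp add: nat_param_space_def)
qed

lemma norm_le_inner_sign_vector:
  fixes t :: "real^'n"
  assumes "\<delta> \<ge> 0"
  shows "\<delta> * norm t \<le> (\<chi> i. if t $ i \<ge> 0 then \<delta> else - \<delta>) \<bullet> t"
proof -
  have "\<delta> * norm t \<le> \<delta> * (\<Sum>i\<in>UNIV. \<bar>t $ i\<bar>)"
    using assms norm_le_l1_cart[of t] by (simp add: mult_left_mono)
  also have "\<dots> = (\<chi> i. if t $ i \<ge> 0 then \<delta> else - \<delta>) \<bullet> t"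
    unfolding inner_vec_def sum_distrib_left by (intro sum.cong) auto
  finally show ?thesis .
qed

text \<open>Interior points of the natural parameter space leave room for an extra factor
  \<open>exp (\<delta> \<parallel>t\<parallel>)\<close>: it is dominated by the sum of \<open>exp ((\<theta> + s) \<bullet> t)\<close> over the
  \<open>2\<^sup>n\<close> sign vectors \<open>s\<close> with entries \<open>\<plusminus>\<delta>\<close>.\<close>

lemma integrable_exp_inner_plus_norm:
  fixes \<nu> :: "(real^'n) measure"
  assumes sets: "sets \<nu> = sets borel" and "open (nat_param_space \<nu>)"
    and "\<theta> \<in> nat_param_space \<nu>"
  shows "\<exists>\<delta>>0. integrable \<nu> (\<lambda>t. exp (\<theta> \<bullet> t + \<delta> * norm t))"
proof -
  obtain r where r: "r > 0" "ball \<theta> r \<subseteq> nat_param_space \<nu>"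
    using assms open_contains_ball by blast
  define \<delta> where "\<delta> = r / (real CARD('n) + 1)"
  have "\<delta> > 0" using r by (simp add: \<delta>_def)
  define s :: "'n set \<Rightarrow> real^'n" where "s S = (\<chi> i. if i \<in> S then \<delta> else - \<delta>)" for S
  have s_in: "\<theta> + s S \<in> nat_param_space \<nu>" for S
  proof -
    have "\<bar>s S $ i\<bar> = \<delta>" for i using \<open>\<delta> > 0\<close> by (simp add: s_def)
    then have "norm (s S) \<le> real CARD('n) * \<delta>" using norm_le_l1_cart[of "s S"] by simp
    also have "\<dots> < r" using r \<open>\<delta> > 0\<close> by (simp add: \<delta>_def field_simps)
    finally show ?thesis using r by (auto simp: dist_norm)
  qed
  have "integrable \<nu> (\<lambda>t. \<Sum>S\<in>UNIV. exp ((\<theta> + s S) \<bullet> t))"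
    by (intro Bochner_Integration.integrable_sum integrable_exp_inner[OF sets s_in])
  then have "integrable \<nu> (\<lambda>t. exp (\<theta> \<bullet> t + \<delta> * norm t))"
  proof (rule Bochner_Integration.integrable_bound)
    show "(\<lambda>t. exp (\<theta> \<bullet> t + \<delta> * norm t)) \<in> borel_measurable \<nu>"
      by (rule borel_measurable_sets_eq_borel[OF sets])
        (intro borel_measurable_continuous_onI continuous_intros)
    have "exp (\<theta> \<bullet> t + \<delta> * norm t) \<le> exp ((\<theta> + s {i. t $ i \<ge> 0}) \<bullet> t)" for t
      using norm_le_inner_sign_vector[of \<delta> t] \<open>\<delta> > 0\<close> by (simp add: s_def inner_add_left)
    also have "\<dots> t \<le> (\<Sum>S\<in>UNIV. exp ((\<theta> + s S) \<bullet> t))" for t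
      by (rule member_le_sum) auto
    also have "\<dots> t \<le> norm (\<Sum>S\<in>UNIV. exp ((\<theta> + s S) \<bullet> t))" for t
      by simp
    finally show "AE t in \<nu>. norm (exp (\<theta> \<bullet> t + \<delta> * norm t))
        \<le> norm (\<Sum>S\<in>UNIV. exp ((\<theta> + s S) \<bullet> t))"
      by (intro AE_I2) simp
  qed
  then show ?thesis using \<open>\<delta> > 0\<close> by blast
qed

lemma one_plus_power_le_exp:
  fixes \<delta> :: real
  assumes "\<delta> > 0"
  shows "\<exists>C. \<forall>x\<ge>0. (1 + x) ^ m \<le> C * exp (\<delta> * x)"
proof (intro exI allI impI)
  fix x :: real assume "x \<ge> 0"
  obtain s where s: "exp (\<delta> * (1 + x)) = (\<Sum>k<Suc m. (\<delta> * (1 + x)) ^ k / fact k)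
      + exp s / fact (Suc m) * (\<delta> * (1 + x)) ^ Suc m"
    using Maclaurin_exp_le[of "\<delta> * (1 + x)" "Suc m"] by blast
  have "(\<delta> * (1 + x)) ^ m / fact m \<le> (\<Sum>k<Suc m. (\<delta> * (1 + x)) ^ k / fact k)"
    by (rule member_le_sum) (use \<open>x \<ge> 0\<close> assms in auto)
  also have "\<dots> \<le> exp (\<delta> * (1 + x))"
    unfolding s using \<open>x \<ge> 0\<close> assms by (intro add_increasing2) auto
  also have "\<dots> = exp \<delta> * exp (\<delta> * x)"
    by (simp add: distrib_left exp_add)
  finally have "\<delta> ^ m * (1 + x) ^ m \<le> fact m * (exp \<delta> * exp (\<delta> * x))"
    by (simp add: power_mult_distrib divide_le_eq mult.commute)
  then show "(1 + x) ^ m \<le> (fact m / \<delta> ^ m * exp \<delta>) * exp (\<delta> * x)"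
    using assms by (simp add: divide_simps mult_ac)
qed

lemma integrable_poly_exp_plus_norm:
  fixes \<nu> :: "(real^'n) measure"
  assumes sets: "sets \<nu> = sets borel" and "open (nat_param_space \<nu>)"
    and "\<theta> \<in> nat_param_space \<nu>"
  shows "\<exists>\<delta>>0. \<forall>m. integrable \<nu> (\<lambda>t. (1 + norm t) ^ m * exp (\<theta> \<bullet> t + \<delta> * norm t))"
proof -
  obtain \<delta> where "\<delta> > 0" and int: "integrable \<nu> (\<lambda>t. exp (\<theta> \<bullet> t + \<delta> * norm t))"
    using integrable_exp_inner_plus_norm[OF assms] by blast
  have "integrable \<nu> (\<lambda>t. (1 + norm t) ^ m * exp (\<theta> \<bullet> t + \<delta>/2 * norm t))" for m
  proof -
    obtain C where C: "\<And>x. x \<ge> 0 \<Longrightarrow> (1 + x) ^ m \<le> C * exp (\<delta>/2 * x)"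
      using one_plus_power_le_exp[of "\<delta>/2" m] \<open>\<delta> > 0\<close> by auto
    from int have "integrable \<nu> (\<lambda>t. C * exp (\<theta> \<bullet> t + \<delta> * norm t))" by simp
    then show ?thesis
    proof (rule Bochner_Integration.integrable_bound)
      show "(\<lambda>t. (1 + norm t) ^ m * exp (\<theta> \<bullet> t + \<delta>/2 * norm t)) \<in> borel_measurable \<nu>"
        by (rule borel_measurable_sets_eq_borel[OF sets])
          (intro borel_measurable_continuous_onI continuous_intros)
      have "(1 + norm t) ^ m * exp (\<theta> \<bullet> t + \<delta>/2 * norm t)
          \<le> C * exp (\<delta>/2 * norm t) * exp (\<theta> \<bullet> t + \<delta>/2 * norm t)" for t :: "real^'n"
        using C by (intro mult_right_mono) auto
      also have "\<dots> t = C * exp (\<theta> \<bullet> t + \<delta> * norm t)" for t :: "real^'n"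
        by (simp add: exp_add[symmetric] algebra_simps)
      also have "\<dots> t \<le> norm (C * exp (\<theta> \<bullet> t + \<delta> * norm t))" for t :: "real^'n"
        by simp
      finally show "AE t in \<nu>. norm ((1 + norm t) ^ m * exp (\<theta> \<bullet> t + \<delta>/2 * norm t))
          \<le> norm (C * exp (\<theta> \<bullet> t + \<delta> * norm t))"
        by (intro AE_I2) simp
    qed
  qed
  then show ?thesis using \<open>\<delta> > 0\<close> by (intro exI[of _ "\<delta>/2"]) auto
qed

lemma integrable_poly_bounded_exp:
  fixes \<nu> :: "(real^'n) measure"
  assumes sets: "sets \<nu> = sets borel" and "open (nat_param_space \<nu>)"
    and "\<theta> \<in> nat_param_space \<nu>"
    and g: "g \<in> borel_measurable borel" "poly_bounded g"
  shows "integrable \<nu> (\<lambda>t. g t * exp (\<theta> \<bullet> t))"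
proof -
  obtain \<delta> where "\<delta> > 0" and B: "\<And>m. integrable \<nu> (\<lambda>t. (1 + norm t) ^ m * exp (\<theta> \<bullet> t + \<delta> * norm t))"
    using integrable_poly_exp_plus_norm[OF assms(1-3)] by blast
  obtain C k where gb: "\<And>t. \<bar>g t\<bar> \<le> C * (1 + norm t) ^ k"
    using g(2) unfolding poly_bounded_def by blast
  from B[of k] have "integrable \<nu> (\<lambda>t. C * ((1 + norm t) ^ k * exp (\<theta> \<bullet> t + \<delta> * norm t)))"
    by simp
  then show ?thesis
  proof (rule Bochner_Integration.integrable_bound)
    show "(\<lambda>t. g t * exp (\<theta> \<bullet> t)) \<in> borel_measurable \<nu>"
      by (rule borel_measurable_sets_eq_borel[OF sets])
        (intro borel_measurable_times g(1) borel_measurable_continuous_onI continuous_intros)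
    have "\<bar>g t\<bar> * exp (\<theta> \<bullet> t) \<le> C * (1 + norm t) ^ k * exp (\<theta> \<bullet> t + \<delta> * norm t)" for t :: "real^'n"
      using gb[of t] \<open>\<delta> > 0\<close> by (intro mult_mono) (simp_all add: order_trans[OF abs_ge_zero gb])
    also have "\<dots> t \<le> norm (C * ((1 + norm t) ^ k * exp (\<theta> \<bullet> t + \<delta> * norm t)))" for t :: "real^'n"
      by (simp add: mult_ac)
    finally show "AE t in \<nu>. norm (g t * exp (\<theta> \<bullet> t))
        \<le> norm (C * ((1 + norm t) ^ k * exp (\<theta> \<bullet> t + \<delta> * norm t)))"
      by (intro AE_I2) (simp add: abs_mult)
  qed
qed

definition exp_integral :: "(real^'n) measure \<Rightarrow> (real^'n \<Rightarrow> real) \<Rightarrow> real^'n \<Rightarrow> real" where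
  "exp_integral \<nu> g \<theta> = (\<integral>t. g t * exp (\<theta> \<bullet> t) \<partial>\<nu>)"

lemma integrable_inner_mult:
  fixes u :: "'a \<Rightarrow> real^'n" and f :: "'a \<Rightarrow> real"
  assumes "\<And>i. integrable M (\<lambda>t. u t $ i * f t)"
  shows "integrable M (\<lambda>t. (a \<bullet> u t) * f t)"
    and "(\<integral>t. (a \<bullet> u t) * f t \<partial>M) = a \<bullet> (\<chi> i. \<integral>t. u t $ i * f t \<partial>M)"
proof -
  have eq: "(\<lambda>t. (a \<bullet> u t) * f t) = (\<lambda>t. \<Sum>i\<in>UNIV. a $ i * (u t $ i * f t))"
    by (simp add: fun_eq_iff inner_vec_def sum_distrib_left sum_distrib_right mult_ac)
  show "integrable M (\<lambda>t. (a \<bullet> u t) * f t)"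
    unfolding eq using assms by (intro Bochner_Integration.integrable_sum) auto
  show "(\<integral>t. (a \<bullet> u t) * f t \<partial>M) = a \<bullet> (\<chi> i. \<integral>t. u t $ i * f t \<partial>M)"
    unfolding eq using assms by (subst Bochner_Integration.integral_sum) (auto simp: inner_vec_def)
qed

lemma abs_exp_minus_one_minus_le: "\<bar>exp x - 1 - x\<bar> \<le> x\<^sup>2 * exp \<bar>x\<bar>" for x :: real
proof -
  obtain s where s: "\<bar>s\<bar> \<le> \<bar>x\<bar>" "exp x = (\<Sum>m<2. x ^ m / fact m) + exp s / fact 2 * x ^ 2"
    using Maclaurin_exp_le[of x 2] by blast
  have eq: "\<bar>exp x - 1 - x\<bar> = exp s / 2 * x\<^sup>2"
    using s(2) by (simp add: numeral_2_eq_2)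
  have "exp s \<le> exp \<bar>x\<bar>" using s(1) by simp
  then have "exp s / 2 \<le> exp \<bar>x\<bar>" using exp_gt_zero[of s] by linarith
  then have "exp s / 2 * x\<^sup>2 \<le> exp \<bar>x\<bar> * x\<^sup>2" by (rule mult_right_mono) simp
  then show ?thesis unfolding eq by (simp add: mult.commute)
qed

lemma abs_exp_inner_minus_one_minus_le:
  fixes h t :: "'a::real_inner"
  assumes "norm h \<le> \<delta>"
  shows "\<bar>exp (h \<bullet> t) - 1 - h \<bullet> t\<bar> \<le> (norm h)\<^sup>2 * ((1 + norm t)\<^sup>2 * exp (\<delta> * norm t))"
proof -
  have ht: "\<bar>h \<bullet> t\<bar> \<le> norm h * norm t" by (rule Cauchy_Schwarz_ineq2)
  also have "\<dots> \<le> \<delta> * norm t" using assms by (intro mult_right_mono) auto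
  finally have "exp \<bar>h \<bullet> t\<bar> \<le> exp (\<delta> * norm t)" by simp
  moreover have "(h \<bullet> t)\<^sup>2 \<le> (norm h * norm t)\<^sup>2"
    using ht by (metis abs_ge_zero power2_abs power_mono)
  ultimately have "\<bar>exp (h \<bullet> t) - 1 - h \<bullet> t\<bar> \<le> (norm h * norm t)\<^sup>2 * exp (\<delta> * norm t)"
    using abs_exp_minus_one_minus_le[of "h \<bullet> t"]
    by (smt (verit) exp_ge_zero mult_mono zero_le_power2)
  also have "\<dots> \<le> (norm h)\<^sup>2 * ((1 + norm t)\<^sup>2 * exp (\<delta> * norm t))"
    unfolding power_mult_distrib mult.assoc
    by (intro mult_left_mono mult_right_mono power_mono) auto
  finally show ?thesis .
qed

lemma exp_integral_remainder_le:
  fixes \<nu> :: "(real^'n) measure"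
  assumes sets: "sets \<nu> = sets borel" and N: "open (nat_param_space \<nu>)"
    and \<theta>: "\<theta> \<in> nat_param_space \<nu>" and \<theta>h: "\<theta> + h \<in> nat_param_space \<nu>"
    and g: "g \<in> borel_measurable borel" and gb: "\<And>t. \<bar>g t\<bar> \<le> C * (1 + norm t) ^ k"
    and "norm h \<le> \<delta>"
  defines "W \<equiv> \<lambda>t. (1 + norm t) ^ (k + 2) * exp (\<theta> \<bullet> t + \<delta> * norm t)"
  assumes W: "integrable \<nu> W"
  shows "\<bar>exp_integral \<nu> g (\<theta> + h) - exp_integral \<nu> g \<theta>
           - h \<bullet> (\<chi> i. exp_integral \<nu> (\<lambda>t. t $ i * g t) \<theta>)\<bar> \<le> (norm h)\<^sup>2 * (C * integral\<^sup>L \<nu> W)"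
proof -
  have "poly_bounded g" using gb by (rule poly_boundedI)
  then have int_g: "integrable \<nu> (\<lambda>t. g t * exp (\<theta>' \<bullet> t))" if "\<theta>' \<in> nat_param_space \<nu>" for \<theta>'
    using that by (intro integrable_poly_bounded_exp[OF sets N _ g])
  have "integrable \<nu> (\<lambda>t. t $ i * g t * exp (\<theta> \<bullet> t))" for i
    using \<open>poly_bounded g\<close>
    by (intro integrable_poly_bounded_exp[OF sets N \<theta>] borel_measurable_times g
        poly_bounded_mult poly_bounded_component borel_measurable_continuous_onI continuous_intros)
  then have int_lin: "integrable \<nu> (\<lambda>t. (h \<bullet> t) * (g t * exp (\<theta> \<bullet> t)))"
    and lin_eq: "h \<bullet> (\<chi> i. exp_integral \<nu> (\<lambda>t. t $ i * g t) \<theta>)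
      = (\<integral>t. (h \<bullet> t) * (g t * exp (\<theta> \<bullet> t)) \<partial>\<nu>)"
    using integrable_inner_mult[where u = "\<lambda>t. t" and f = "\<lambda>t. g t * exp (\<theta> \<bullet> t)"]
    by (simp_all add: exp_integral_def mult.assoc)
  define R where "R t = g t * exp (\<theta> \<bullet> t) * (exp (h \<bullet> t) - 1 - h \<bullet> t)" for t
  have R_eq: "R = (\<lambda>t. g t * exp ((\<theta> + h) \<bullet> t) - g t * exp (\<theta> \<bullet> t)
      - (h \<bullet> t) * (g t * exp (\<theta> \<bullet> t)))"
    by (auto simp: R_def inner_add_left exp_add algebra_simps)
  have "exp_integral \<nu> g (\<theta> + h) - exp_integral \<nu> g \<theta>
      - h \<bullet> (\<chi> i. exp_integral \<nu> (\<lambda>t. t $ i * g t) \<theta>) = integral\<^sup>L \<nu> R"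
    unfolding R_eq lin_eq unfolding exp_integral_def using int_g[OF \<theta>h] int_g[OF \<theta>] int_lin
    by simp
  also have "\<bar>\<dots>\<bar> \<le> (\<integral>t. (norm h)\<^sup>2 * (C * W t) \<partial>\<nu>)"
  proof (rule integral_abs_bound_integral)
    show "integrable \<nu> R"
      unfolding R_eq using int_g[OF \<theta>h] int_g[OF \<theta>] int_lin by auto
    show "integrable \<nu> (\<lambda>t. (norm h)\<^sup>2 * (C * W t))" using W by simp
    have "\<bar>R t\<bar> \<le> C * (1 + norm t) ^ k * exp (\<theta> \<bullet> t)
        * ((norm h)\<^sup>2 * ((1 + norm t)\<^sup>2 * exp (\<delta> * norm t)))" for t
      unfolding R_def abs_mult using gb[of t] \<open>norm h \<le> \<delta>\<close>
      by (intro mult_mono abs_exp_inner_minus_one_minus_le) auto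
    then show "\<bar>R t\<bar> \<le> (norm h)\<^sup>2 * (C * W t)" for t
      by (simp add: W_def exp_add power_add power2_eq_square mult_ac)
  qed
  also have "\<dots> = (norm h)\<^sup>2 * (C * integral\<^sup>L \<nu> W)"
    by (simp only: integral_mult_right_zero)
  finally show ?thesis .
qed

lemma has_derivative_exp_integral:
  fixes \<nu> :: "(real^'n) measure"
  assumes sets: "sets \<nu> = sets borel" and N: "open (nat_param_space \<nu>)"
    and \<theta>: "\<theta> \<in> nat_param_space \<nu>"
    and g: "g \<in> borel_measurable borel" "poly_bounded g"
  shows "(exp_integral \<nu> g has_derivative
           (\<lambda>h. h \<bullet> (\<chi> i. exp_integral \<nu> (\<lambda>t. t $ i * g t) \<theta>))) (at \<theta>)"
proof -
  obtain \<delta> where "\<delta> > 0"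
    and B: "\<And>m. integrable \<nu> (\<lambda>t. (1 + norm t) ^ m * exp (\<theta> \<bullet> t + \<delta> * norm t))"
    using integrable_poly_exp_plus_norm[OF sets N \<theta>] by blast
  obtain r where "r > 0" and r: "ball \<theta> r \<subseteq> nat_param_space \<nu>"
    using N \<theta> open_contains_ball by blast
  obtain C k where gb: "\<And>t. \<bar>g t\<bar> \<le> C * (1 + norm t) ^ k"
    using g(2) unfolding poly_bounded_def by blast
  let ?K = "C * (\<integral>t. (1 + norm t) ^ (k + 2) * exp (\<theta> \<bullet> t + \<delta> * norm t) \<partial>\<nu>)"
  show ?thesis
  proof (rule has_derivative_quadratic_remainder[where d = "min \<delta> r" and C = ?K])
    show "bounded_linear (\<lambda>h. h \<bullet> (\<chi> i. exp_integral \<nu> (\<lambda>t. t $ i * g t) \<theta>))"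
      by (intro bounded_linear_intros)
    show "min \<delta> r > 0" using \<open>\<delta> > 0\<close> \<open>r > 0\<close> by simp
    fix h :: "real^'n" assume h: "norm h < min \<delta> r"
    then have "\<theta> + h \<in> nat_param_space \<nu>" using r by (auto simp: dist_norm)
    with h show "norm (exp_integral \<nu> g (\<theta> + h) - exp_integral \<nu> g \<theta>
        - h \<bullet> (\<chi> i. exp_integral \<nu> (\<lambda>t. t $ i * g t) \<theta>)) \<le> ?K * (norm h)\<^sup>2"
      using exp_integral_remainder_le[OF sets N \<theta> _ g(1) gb, of h \<delta>] B[of "k + 2"]
      by (simp add: mult_ac)
  qed
qed

section \<open>Regular minimal exponential families\<close>

definition partition_fn :: "(real^'n) measure \<Rightarrow> real^'n \<Rightarrow> real" where
  "partition_fn \<nu> \<theta> = exp_integral \<nu> (\<lambda>_. 1) \<theta>"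

definition first_moments :: "(real^'n) measure \<Rightarrow> real^'n \<Rightarrow> real^'n" where
  "first_moments \<nu> \<theta> = (\<chi> i. exp_integral \<nu> (\<lambda>t. t $ i) \<theta>)"

definition second_moments :: "(real^'n) measure \<Rightarrow> real^'n \<Rightarrow> real^'n^'n" where
  "second_moments \<nu> \<theta> = (\<chi> i j. exp_integral \<nu> (\<lambda>t. t $ i * t $ j) \<theta>)"

lemma add_one_less_exp: "x \<noteq> 0 \<Longrightarrow> 1 + x < exp x" for x :: real
proof -
  assume "x \<noteq> 0"
  obtain s where "exp x = (\<Sum>m<2. x ^ m / fact m) + exp s / fact 2 * x ^ 2"
    using Maclaurin_exp_le[of x 2] by blast
  then have "exp x = 1 + x + exp s / 2 * x\<^sup>2" by (simp add: numeral_2_eq_2)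
  moreover have "0 < exp s / 2 * x\<^sup>2" using \<open>x \<noteq> 0\<close> by simp
  ultimately show ?thesis by linarith
qed

locale minimal_regular_ef =
  fixes \<nu> :: "(real^'n::finite) measure"
  assumes regular: "regular_ef \<nu>" and minimal: "minimal_ef \<nu>"
begin

abbreviation "N \<equiv> nat_param_space \<nu>"

lemma sets_eq_borel: "sets \<nu> = sets borel" and open_N: "open N"
  using regular by (auto simp: regular_ef_def)

lemma integrable_exp:
  "\<theta> \<in> N \<Longrightarrow> g \<in> borel_measurable borel \<Longrightarrow> poly_bounded g \<Longrightarrow> integrable \<nu> (\<lambda>t. g t * exp (\<theta> \<bullet> t))"
  by (rule integrable_poly_bounded_exp[OF sets_eq_borel open_N])

lemma integral_pos_if_zeros_on_hyperplane:
  fixes F :: "real^'n \<Rightarrow> real"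
  assumes "integrable \<nu> F" and "\<And>t. 0 \<le> F t"
    and "\<And>t. F t = 0 \<Longrightarrow> a \<bullet> t = c" and "a \<noteq> 0"
  shows "0 < integral\<^sup>L \<nu> F"
proof -
  have "integral\<^sup>L \<nu> F \<noteq> 0"
  proof
    assume "integral\<^sup>L \<nu> F = 0"
    then have "AE t in \<nu>. F t = 0"
      using integral_nonneg_eq_0_iff_AE[OF assms(1)] assms(2) by simp
    then have "AE t in \<nu>. a \<bullet> t = c" by (rule eventually_mono) (rule assms(3))
    then show False using minimal \<open>a \<noteq> 0\<close> unfolding minimal_ef_def by blast
  qed
  moreover have "0 \<le> integral\<^sup>L \<nu> F" using assms(2) by simp
  ultimately show ?thesis by simp
qed

lemma partition_fn_pos: "\<theta> \<in> N \<Longrightarrow> 0 < partition_fn \<nu> \<theta>"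
  \<comment> \<open>the integrand never vanishes, so any nonzero normal vector will do\<close>
  unfolding partition_fn_def exp_integral_def
  by (rule integral_pos_if_zeros_on_hyperplane[where a = "axis undefined 1" and c = 0])
    (simp_all add: integrable_exp_inner[OF sets_eq_borel])

lemma cumulant_eq: "\<theta> \<in> N \<Longrightarrow> cumulant \<nu> \<theta> = ln (partition_fn \<nu> \<theta>)"
  unfolding cumulant_def partition_fn_def exp_integral_def
  by (subst nn_integral_eq_integral) (simp_all add: integrable_exp_inner[OF sets_eq_borel])

lemma ef_density_eq: "\<theta> \<in> N \<Longrightarrow> ef_density \<nu> \<theta> t = exp (\<theta> \<bullet> t) / partition_fn \<nu> \<theta>"
  using partition_fn_pos by (simp add: ef_density_def cumulant_eq exp_diff)

lemma integrable_ef_density: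
  "\<theta> \<in> N \<Longrightarrow> g \<in> borel_measurable borel \<Longrightarrow> poly_bounded g \<Longrightarrow> integrable \<nu> (\<lambda>t. g t * ef_density \<nu> \<theta> t)"
  using integrable_exp by (simp add: ef_density_eq)

lemma mean_param_eq: "\<theta> \<in> N \<Longrightarrow> mean_param \<nu> \<theta> = (\<chi> i. first_moments \<nu> \<theta> $ i / partition_fn \<nu> \<theta>)"
  by (simp add: mean_param_def first_moments_def partition_fn_def exp_integral_def ef_density_eq)

lemma var_matrix_eq:
  assumes "\<theta> \<in> N"
  shows "var_matrix \<nu> \<theta> = (\<chi> i j. second_moments \<nu> \<theta> $ i $ j / partition_fn \<nu> \<theta>
                                 - mean_param \<nu> \<theta> $ i * mean_param \<nu> \<theta> $ j)"
proof -
  define m where "m = mean_param \<nu> \<theta>"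
  define Z where "Z = partition_fn \<nu> \<theta>"
  have "Z > 0" using partition_fn_pos[OF assms] by (simp add: Z_def)
  have int: "integrable \<nu> (\<lambda>t. t $ i * t $ j * exp (\<theta> \<bullet> t))"
    "integrable \<nu> (\<lambda>t. t $ i * exp (\<theta> \<bullet> t))" for i j
    by (intro integrable_exp[OF assms] poly_bounded_mult poly_bounded_component
        borel_measurable_continuous_onI continuous_intros)+
  have "var_matrix \<nu> \<theta> $ i $ j = second_moments \<nu> \<theta> $ i $ j / Z - m $ i * m $ j" for i j
  proof -
    have "var_matrix \<nu> \<theta> $ i $ j
        = (\<integral>t. (t $ i * t $ j * exp (\<theta> \<bullet> t) - m $ j * (t $ i * exp (\<theta> \<bullet> t))
              - m $ i * (t $ j * exp (\<theta> \<bullet> t)) + m $ i * m $ j * exp (\<theta> \<bullet> t)) / Z \<partial>\<nu>)"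
      unfolding var_matrix_def m_def[symmetric] Z_def[symmetric] vec_lambda_beta
      by (intro Bochner_Integration.integral_cong)
        (simp_all add: ef_density_eq[OF assms] Z_def field_simps)
    also have "\<dots> = (second_moments \<nu> \<theta> $ i $ j - m $ j * (m $ i * Z) - m $ i * (m $ j * Z)
                      + m $ i * m $ j * Z) / Z"
      using int integrable_exp_inner[OF sets_eq_borel assms] \<open>Z > 0\<close> mean_param_eq[OF assms]
      by (simp add: m_def Z_def second_moments_def first_moments_def partition_fn_def
          exp_integral_def)
    also have "\<dots> = second_moments \<nu> \<theta> $ i $ j / Z - m $ i * m $ j"
      using \<open>Z > 0\<close> by (simp add: field_simps)
    finally show ?thesis .
  qed
  then show ?thesis by (simp add: vec_eq_iff m_def Z_def)
qed

lemma has_derivative_partition_fn: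
  "\<theta> \<in> N \<Longrightarrow> (partition_fn \<nu> has_derivative (\<lambda>h. h \<bullet> first_moments \<nu> \<theta>)) (at \<theta>)"
  using has_derivative_exp_integral[OF sets_eq_borel open_N, where g = "\<lambda>_. 1"]
  by (simp add: partition_fn_def[abs_def] first_moments_def poly_bounded_const)

lemma has_derivative_first_moments:
  assumes "\<theta> \<in> N"
  shows "(first_moments \<nu> has_derivative (\<lambda>h. second_moments \<nu> \<theta> *v h)) (at \<theta>)"
proof (rule has_derivative_vec_componentwise)
  fix i
  have "(exp_integral \<nu> (\<lambda>t. t $ i) has_derivative
      (\<lambda>h. h \<bullet> (\<chi> j. exp_integral \<nu> (\<lambda>t. t $ j * t $ i) \<theta>))) (at \<theta>)"
    by (intro has_derivative_exp_integral[OF sets_eq_borel open_N assms] poly_bounded_component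
        borel_measurable_continuous_onI continuous_intros)
  then show "((\<lambda>\<theta>. first_moments \<nu> \<theta> $ i) has_derivative
      (\<lambda>h. (second_moments \<nu> \<theta> *v h) $ i)) (at \<theta>)"
    by (simp add: first_moments_def second_moments_def matrix_vector_mult_def inner_vec_def mult_ac)
qed

lemma isCont_second_moments:
  assumes "\<theta> \<in> N"
  shows "isCont (second_moments \<nu>) \<theta>"
proof -
  have "isCont (exp_integral \<nu> (\<lambda>t. t $ i * t $ j)) \<theta>" for i j
  proof -
    have "(\<lambda>t::real^'n. t $ i * t $ j) \<in> borel_measurable borel"
      by (intro borel_measurable_continuous_onI continuous_intros)
    moreover have "poly_bounded (\<lambda>t::real^'n. t $ i * t $ j)"
      by (intro poly_bounded_mult poly_bounded_component)
    ultimately show ?thesis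
      by (rule has_derivative_continuous[OF
          has_derivative_exp_integral[OF sets_eq_borel open_N assms]])
  qed
  then show ?thesis
    unfolding second_moments_def continuous_at
    by (intro tendsto_vec_lambda) (simp add: continuous_at)
qed

lemma has_derivative_cumulant:
  assumes "\<theta> \<in> N"
  shows "(cumulant \<nu> has_derivative (\<lambda>h. h \<bullet> mean_param \<nu> \<theta>)) (at \<theta>)"
proof -
  have "((\<lambda>\<theta>. ln (partition_fn \<nu> \<theta>)) has_derivative
      (\<lambda>h. (h \<bullet> first_moments \<nu> \<theta>) * inverse (partition_fn \<nu> \<theta>))) (at \<theta>)"
    by (rule has_derivative_ln[OF partition_fn_pos[OF assms] has_derivative_partition_fn[OF assms]])
  moreover have "(h \<bullet> first_moments \<nu> \<theta>) * inverse (partition_fn \<nu> \<theta>) = h \<bullet> mean_param \<nu> \<theta>" for h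
    by (simp add: mean_param_eq[OF assms] inner_vec_def divide_inverse sum_distrib_right mult.assoc)
  ultimately show ?thesis
    by (auto intro: has_derivative_transform_within_open[OF _ open_N assms] simp: cumulant_eq)
qed

lemma var_matrix_mult_nth:
  assumes "\<theta> \<in> N"
  defines "Z \<equiv> partition_fn \<nu> \<theta>" and "M \<equiv> first_moments \<nu> \<theta>"
  shows "(var_matrix \<nu> \<theta> *v h) $ i
    = ((second_moments \<nu> \<theta> *v h) $ i * Z - M $ i * (h \<bullet> M)) / (Z * Z)"
proof -
  have "Z > 0" using partition_fn_pos[OF assms(1)] by (simp add: Z_def)
  have "(var_matrix \<nu> \<theta> *v h) $ i
      = (\<Sum>j\<in>UNIV. (second_moments \<nu> \<theta> $ i $ j / Z - M $ i / Z * (M $ j / Z)) * h $ j)"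
    by (simp add: var_matrix_eq[OF assms(1)] mean_param_eq[OF assms(1)] Z_def M_def
        matrix_vector_mult_def)
  also have "\<dots> = (\<Sum>j\<in>UNIV. second_moments \<nu> \<theta> $ i $ j * h $ j * Z - M $ i * (h $ j * M $ j))
      / (Z * Z)"
    unfolding sum_divide_distrib using \<open>Z > 0\<close> by (intro sum.cong) (simp_all add: field_simps)
  also have "\<dots> = ((second_moments \<nu> \<theta> *v h) $ i * Z - M $ i * (h \<bullet> M)) / (Z * Z)"
    by (simp add: matrix_vector_mult_def inner_vec_def sum_subtractf sum_distrib_left
        sum_distrib_right mult_ac)
  finally show ?thesis .
qed

lemma has_derivative_mean_param:
  assumes "\<theta> \<in> N"
  shows "(mean_param \<nu> has_derivative (\<lambda>h. var_matrix \<nu> \<theta> *v h)) (at \<theta>)"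
proof -
  have "((\<lambda>\<theta>. \<chi> i. first_moments \<nu> \<theta> $ i / partition_fn \<nu> \<theta>) has_derivative
      (\<lambda>h. var_matrix \<nu> \<theta> *v h)) (at \<theta>)"
  proof (rule has_derivative_vec_componentwise)
    fix i
    show "((\<lambda>\<theta>. (\<chi> i. first_moments \<nu> \<theta> $ i / partition_fn \<nu> \<theta>) $ i) has_derivative
        (\<lambda>h. (var_matrix \<nu> \<theta> *v h) $ i)) (at \<theta>)"
      unfolding vec_lambda_beta var_matrix_mult_nth[OF assms]
      by (intro has_derivative_divide' bounded_linear.has_derivative[OF bounded_linear_vec_nth]
          has_derivative_first_moments has_derivative_partition_fn assms)
        (use partition_fn_pos[OF assms] in simp)
  qed
  then show ?thesis
    by (rule has_derivative_transform_within_open[OF _ open_N assms]) (simp add: mean_param_eq)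
qed

lemma isCont_var_matrix:
  assumes "\<theta> \<in> N"
  shows "isCont (var_matrix \<nu>) \<theta>"
proof -
  have "\<forall>\<^sub>F \<theta>' in nhds \<theta>. (\<chi> i j. second_moments \<nu> \<theta>' $ i $ j / partition_fn \<nu> \<theta>'
      - mean_param \<nu> \<theta>' $ i * mean_param \<nu> \<theta>' $ j) = var_matrix \<nu> \<theta>'"
    using open_N assms by (auto simp: eventually_nhds var_matrix_eq)
  moreover have "isCont (\<lambda>\<theta>'. \<chi> i j. second_moments \<nu> \<theta>' $ i $ j / partition_fn \<nu> \<theta>'
      - mean_param \<nu> \<theta>' $ i * mean_param \<nu> \<theta>' $ j) \<theta>"
    using isCont_second_moments[OF assms] partition_fn_pos[OF assms]
      has_derivative_continuous[OF has_derivative_partition_fn[OF assms]]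
      has_derivative_continuous[OF has_derivative_mean_param[OF assms]]
    unfolding continuous_at
    by (intro tendsto_vec_lambda tendsto_diff tendsto_mult tendsto_divide tendsto_vec_nth) auto
  ultimately show ?thesis by (simp add: isCont_cong)
qed

lemma gibbs_integrand:
  assumes \<theta>1: "\<theta>1 \<in> N" and \<theta>2: "\<theta>2 \<in> N"
  defines "d \<equiv> \<theta>2 - \<theta>1" and "c \<equiv> (\<theta>2 - \<theta>1) \<bullet> mean_param \<nu> \<theta>1"
  defines "F \<equiv> \<lambda>t. (exp (d \<bullet> t - c) - 1 - (d \<bullet> t - c)) * exp (\<theta>1 \<bullet> t)"
  shows "integrable \<nu> F" and "integral\<^sup>L \<nu> F = exp (- c) * partition_fn \<nu> \<theta>2 - partition_fn \<nu> \<theta>1"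
proof -
  have F_eq: "F = (\<lambda>t. exp (- c) * exp (\<theta>2 \<bullet> t) - exp (\<theta>1 \<bullet> t)
      - ((d \<bullet> t) * exp (\<theta>1 \<bullet> t) - c * exp (\<theta>1 \<bullet> t)))"
    by (auto simp: F_def d_def algebra_simps exp_add[symmetric] inner_diff_left)
  have "partition_fn \<nu> \<theta>1 > 0" using partition_fn_pos[OF \<theta>1] .
  then have int_lin: "integrable \<nu> (\<lambda>t. (d \<bullet> t) * exp (\<theta>1 \<bullet> t))"
    and lin: "(\<integral>t. (d \<bullet> t) * exp (\<theta>1 \<bullet> t) \<partial>\<nu>) = c * partition_fn \<nu> \<theta>1"
    using integrable_inner_mult[where u = "\<lambda>t. t" and f = "\<lambda>t. exp (\<theta>1 \<bullet> t)" and a = d]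
      integrable_exp[OF \<theta>1 _ poly_bounded_component]
    by (auto simp: c_def d_def mean_param_eq[OF \<theta>1] first_moments_def exp_integral_def
        inner_vec_def sum_distrib_right)
  note int_exp = integrable_exp_inner[OF sets_eq_borel \<theta>1] integrable_exp_inner[OF sets_eq_borel \<theta>2]
  show "integrable \<nu> F"
    unfolding F_eq using int_lin int_exp by auto
  show "integral\<^sup>L \<nu> F = exp (- c) * partition_fn \<nu> \<theta>2 - partition_fn \<nu> \<theta>1"
    unfolding F_eq using int_lin int_exp lin by (simp add: partition_fn_def exp_integral_def)
qed

text \<open>Gibbs' inequality: the integrand \<open>F\<close> of \<open>gibbs_integrand\<close> is nonnegative and vanishes
  only on a hyperplane.\<close>

lemma cumulant_above_tangent:
  assumes \<theta>1: "\<theta>1 \<in> N" and \<theta>2: "\<theta>2 \<in> N"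
  shows "(\<theta>2 - \<theta>1) \<bullet> mean_param \<nu> \<theta>1 \<le> cumulant \<nu> \<theta>2 - cumulant \<nu> \<theta>1"
    and "\<theta>1 \<noteq> \<theta>2 \<Longrightarrow> (\<theta>2 - \<theta>1) \<bullet> mean_param \<nu> \<theta>1 < cumulant \<nu> \<theta>2 - cumulant \<nu> \<theta>1"
proof -
  define d where "d = \<theta>2 - \<theta>1"
  define c where "c = (\<theta>2 - \<theta>1) \<bullet> mean_param \<nu> \<theta>1"
  define F where "F t = (exp (d \<bullet> t - c) - 1 - (d \<bullet> t - c)) * exp (\<theta>1 \<bullet> t)" for t
  define Z1 where "Z1 = partition_fn \<nu> \<theta>1"
  have "Z1 > 0" using partition_fn_pos[OF \<theta>1] by (simp add: Z1_def)
  have int_F: "integrable \<nu> F"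
    using gibbs_integrand(1)[OF \<theta>1 \<theta>2] by (simp add: F_def[abs_def] c_def d_def)
  have "cumulant \<nu> \<theta>2 - cumulant \<nu> \<theta>1 - c = ln (1 + integral\<^sup>L \<nu> F / Z1)"
    using gibbs_integrand(2)[OF \<theta>1 \<theta>2] \<open>Z1 > 0\<close> partition_fn_pos[OF \<theta>2]
    by (simp add: F_def[abs_def] c_def d_def Z1_def cumulant_eq \<theta>1 \<theta>2 ln_div ln_mult field_simps)
  then have cumulant_diff: "cumulant \<nu> \<theta>2 - cumulant \<nu> \<theta>1 - (\<theta>2 - \<theta>1) \<bullet> mean_param \<nu> \<theta>1
      = ln (1 + integral\<^sup>L \<nu> F / Z1)"
    by (simp add: c_def)
  have F_nonneg: "0 \<le> F t" for t
  proof -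
    have "0 \<le> exp (d \<bullet> t - c) - 1 - (d \<bullet> t - c)"
      using exp_ge_add_one_self[of "d \<bullet> t - c"] by linarith
    then show ?thesis unfolding F_def by simp
  qed
  then have "0 \<le> integral\<^sup>L \<nu> F" by simp
  then have "0 \<le> ln (1 + integral\<^sup>L \<nu> F / Z1)" using \<open>Z1 > 0\<close> by (intro ln_ge_zero) simp
  then show "(\<theta>2 - \<theta>1) \<bullet> mean_param \<nu> \<theta>1 \<le> cumulant \<nu> \<theta>2 - cumulant \<nu> \<theta>1"
    using cumulant_diff by simp
  assume "\<theta>1 \<noteq> \<theta>2"
  have zeros: "F t = 0 \<Longrightarrow> d \<bullet> t = c" for t
    using add_one_less_exp[of "d \<bullet> t - c"] by (force simp: F_def)
  have "0 < integral\<^sup>L \<nu> F"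
    using \<open>\<theta>1 \<noteq> \<theta>2\<close> by (intro integral_pos_if_zeros_on_hyperplane[OF int_F F_nonneg zeros])
      (auto simp: d_def)
  then have "0 < ln (1 + integral\<^sup>L \<nu> F / Z1)" using \<open>Z1 > 0\<close> by (intro ln_gt_zero) simp
  then show "(\<theta>2 - \<theta>1) \<bullet> mean_param \<nu> \<theta>1 < cumulant \<nu> \<theta>2 - cumulant \<nu> \<theta>1"
    using cumulant_diff by simp
qed

lemma mean_param_strict_mono:
  assumes "\<theta>1 \<in> N" "\<theta>2 \<in> N" "\<theta>1 \<noteq> \<theta>2"
  shows "0 < (\<theta>2 - \<theta>1) \<bullet> (mean_param \<nu> \<theta>2 - mean_param \<nu> \<theta>1)"
  using cumulant_above_tangent(2)[OF assms] cumulant_above_tangent(2)[OF assms(2,1)] assms(3)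
  by (simp add: inner_diff_left inner_diff_right)

lemma canon_of_mean_mean_param:
  assumes "\<theta> \<in> N"
  shows "canon_of_mean \<nu> (mean_param \<nu> \<theta>) = \<theta>"
  unfolding canon_of_mean_def
proof (rule the_equality)
  show "\<theta> \<in> N \<and> mean_param \<nu> \<theta> = mean_param \<nu> \<theta>" using assms by simp
  show "\<theta>' = \<theta>" if "\<theta>' \<in> N \<and> mean_param \<nu> \<theta>' = mean_param \<nu> \<theta>" for \<theta>'
    using mean_param_strict_mono[of \<theta> \<theta>'] that assms by fastforce
qed

lemma fenchel_conj_mean_param:
  assumes "\<theta> \<in> N"
  shows "fenchel_conj \<nu> (mean_param \<nu> \<theta>) = \<theta> \<bullet> mean_param \<nu> \<theta> - cumulant \<nu> \<theta>"
  unfolding fenchel_conj_def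
proof (rule cSup_eq_maximum)
  show "\<theta> \<bullet> mean_param \<nu> \<theta> - cumulant \<nu> \<theta> \<in> (\<lambda>\<theta>'. \<theta>' \<bullet> mean_param \<nu> \<theta> - cumulant \<nu> \<theta>') ` N"
    using assms by auto
  fix y assume "y \<in> (\<lambda>\<theta>'. \<theta>' \<bullet> mean_param \<nu> \<theta> - cumulant \<nu> \<theta>') ` N"
  then obtain \<theta>' where "\<theta>' \<in> N" and "y = \<theta>' \<bullet> mean_param \<nu> \<theta> - cumulant \<nu> \<theta>'" by blast
  then show "y \<le> \<theta> \<bullet> mean_param \<nu> \<theta> - cumulant \<nu> \<theta>"
    using cumulant_above_tangent(1)[OF assms \<open>\<theta>' \<in> N\<close>] by (simp add: inner_diff_left)
qed

lemma var_matrix_symmetric: "transpose (var_matrix \<nu> \<theta>) = var_matrix \<nu> \<theta>"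
  by (simp add: transpose_def var_matrix_def vec_eq_iff mult.commute)

lemma var_matrix_quadratic_form:
  assumes "\<theta> \<in> N"
  shows "x \<bullet> (var_matrix \<nu> \<theta> *v x) = (\<integral>t. (x \<bullet> (t - mean_param \<nu> \<theta>))\<^sup>2 * ef_density \<nu> \<theta> t \<partial>\<nu>)"
proof -
  define m where "m = mean_param \<nu> \<theta>"
  define p where "p = ef_density \<nu> \<theta>"
  have int: "integrable \<nu> (\<lambda>t. (t - m) $ j * ((t $ i - m $ i) * p t))" for i j
  proof -
    have "integrable \<nu> (\<lambda>t. ((t $ j - m $ j) * (t $ i - m $ i)) * p t)"
      unfolding p_def
      by (intro integrable_ef_density[OF assms] poly_bounded_mult poly_bounded_diff
          poly_bounded_component poly_bounded_const
          borel_measurable_continuous_onI continuous_intros)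
    then show ?thesis by (simp add: mult.assoc)
  qed
  have "(var_matrix \<nu> \<theta> *v x) $ i = (\<integral>t. (x \<bullet> (t - m)) * ((t $ i - m $ i) * p t) \<partial>\<nu>)" for i
    using integrable_inner_mult(2)[where u = "\<lambda>t. t - m", OF int]
    by (simp add: matrix_vector_mult_def inner_vec_def var_matrix_def m_def p_def mult_ac)
  then have "var_matrix \<nu> \<theta> *v x = (\<chi> i. \<integral>t. (t - m) $ i * ((x \<bullet> (t - m)) * p t) \<partial>\<nu>)"
    by (simp add: vec_eq_iff mult_ac)
  then have "x \<bullet> (var_matrix \<nu> \<theta> *v x) = x \<bullet> (\<chi> i. \<integral>t. (t - m) $ i * ((x \<bullet> (t - m)) * p t) \<partial>\<nu>)"
    by simp
  also have "\<dots> = (\<integral>t. (x \<bullet> (t - m)) * ((x \<bullet> (t - m)) * p t) \<partial>\<nu>)"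
    using integrable_inner_mult[where u = "\<lambda>t. t - m", OF int]
    by (intro integrable_inner_mult(2)[symmetric]) (simp add: mult_ac)
  finally show ?thesis by (simp add: m_def p_def power2_eq_square mult_ac)
qed

lemma var_matrix_pos_def:
  assumes "\<theta> \<in> N" and "x \<noteq> 0"
  shows "0 < x \<bullet> (var_matrix \<nu> \<theta> *v x)"
  unfolding var_matrix_quadratic_form[OF assms(1)]
proof (rule integral_pos_if_zeros_on_hyperplane[where a = x and c = "x \<bullet> mean_param \<nu> \<theta>"])
  show "integrable \<nu> (\<lambda>t. (x \<bullet> (t - mean_param \<nu> \<theta>))\<^sup>2 * ef_density \<nu> \<theta> t)"
    unfolding power2_eq_square inner_diff_right
    by (intro integrable_ef_density[OF assms(1)] poly_bounded_mult poly_bounded_diff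
        poly_bounded_inner poly_bounded_const borel_measurable_continuous_onI continuous_intros)
  show "0 \<le> (x \<bullet> (t - mean_param \<nu> \<theta>))\<^sup>2 * ef_density \<nu> \<theta> t" for t
    by (simp add: ef_density_def)
  show "x \<bullet> t = x \<bullet> mean_param \<nu> \<theta>" if "(x \<bullet> (t - mean_param \<nu> \<theta>))\<^sup>2 * ef_density \<nu> \<theta> t = 0" for t
    using that by (simp add: ef_density_def inner_diff_right)
qed (fact assms(2))

end

section \<open>The mixed parametrization\<close>

locale minimal_regular_ef_split =
  minimal_regular_ef \<nu> for \<nu> :: "(real^('p::finite + 'q::finite)) measure"
begin

definition mixed_param :: "real^('p + 'q) \<Rightarrow> real^('p + 'q)" where
  "mixed_param \<theta> = (\<chi> k. case k of Inl i \<Rightarrow> mean_param \<nu> \<theta> $ Inl i | Inr j \<Rightarrow> \<theta> $ Inr j)"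

lemma spd_var_matrix: "\<theta> \<in> N \<Longrightarrow> spd_block_matrix (var_matrix \<nu> \<theta>)"
  by unfold_locales (simp_all add: var_matrix_symmetric var_matrix_pos_def)

lemma has_derivative_mixed_param:
  assumes "\<theta> \<in> N"
  shows "(mixed_param has_derivative (\<lambda>h. mixed_jacobian (var_matrix \<nu> \<theta>) *v h)) (at \<theta>)"
proof (rule has_derivative_vec_componentwise)
  fix k :: "'p + 'q"
  have "((\<lambda>\<theta>. mean_param \<nu> \<theta> $ k) has_derivative (\<lambda>h. (var_matrix \<nu> \<theta> *v h) $ k)) (at \<theta>)"
    and "((\<lambda>\<theta>. \<theta> $ k) has_derivative (\<lambda>h. h $ k)) (at \<theta>)"
    using bounded_linear.has_derivative[OF bounded_linear_vec_nth
        has_derivative_mean_param[OF assms]]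
      bounded_linear.has_derivative[OF bounded_linear_vec_nth has_derivative_ident] .
  then show "((\<lambda>\<theta>. mixed_param \<theta> $ k) has_derivative
      (\<lambda>h. (mixed_jacobian (var_matrix \<nu> \<theta>) *v h) $ k)) (at \<theta>)"
    by (cases k) (simp_all add: mixed_param_def mixed_jacobian_mult_Inl mixed_jacobian_mult_Inr)
qed

lemma inj_on_mixed_param: "inj_on mixed_param N"
proof (rule inj_onI, rule ccontr)
  fix \<theta>1 \<theta>2
  assume "\<theta>1 \<in> N" "\<theta>2 \<in> N" and eq: "mixed_param \<theta>1 = mixed_param \<theta>2" and "\<theta>1 \<noteq> \<theta>2"
  have "mean_param \<nu> \<theta>1 $ Inl i = mean_param \<nu> \<theta>2 $ Inl i" and "\<theta>1 $ Inr j = \<theta>2 $ Inr j" for i j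
    using arg_cong[OF eq, of "\<lambda>x. x $ Inl i"] arg_cong[OF eq, of "\<lambda>x. x $ Inr j"]
    by (simp_all add: mixed_param_def)
  then have prod0: "(\<theta>2 $ k - \<theta>1 $ k) * (mean_param \<nu> \<theta>2 $ k - mean_param \<nu> \<theta>1 $ k) = 0" for k
    by (cases k) simp_all
  have "(\<theta>2 - \<theta>1) \<bullet> (mean_param \<nu> \<theta>2 - mean_param \<nu> \<theta>1) = 0"
    by (simp add: inner_vec_def prod0)
  then show False
    using mean_param_strict_mono[OF \<open>\<theta>1 \<in> N\<close> \<open>\<theta>2 \<in> N\<close> \<open>\<theta>1 \<noteq> \<theta>2\<close>] by simp
qed

lemma mixed_to_canon_mixed_param:
  assumes "\<theta> \<in> N"
  shows "mixed_to_canon \<nu> (mixed_param \<theta>) = \<theta>"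
  unfolding mixed_to_canon_def
proof (rule the_equality)
  show "\<theta> \<in> N \<and> (\<forall>i. mean_param \<nu> \<theta> $ Inl i = mixed_param \<theta> $ Inl i)
      \<and> (\<forall>j. \<theta> $ Inr j = mixed_param \<theta> $ Inr j)"
    using assms by (simp add: mixed_param_def)
  fix \<theta>' assume "\<theta>' \<in> N \<and> (\<forall>i. mean_param \<nu> \<theta>' $ Inl i = mixed_param \<theta> $ Inl i)
      \<and> (\<forall>j. \<theta>' $ Inr j = mixed_param \<theta> $ Inr j)"
  then have "\<theta>' \<in> N" and "mixed_param \<theta>' = mixed_param \<theta>"
    by (auto simp: vec_eq_iff mixed_param_def split: sum.split)
  then show "\<theta>' = \<theta>" using inj_on_mixed_param assms by (auto dest: inj_onD)
qed

abbreviation "mixed_param_space \<equiv> mixed_param ` N"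

lemma continuous_on_mixed_param: "continuous_on N mixed_param"
  by (intro continuous_at_imp_continuous_on ballI
      has_derivative_continuous[OF has_derivative_mixed_param])

lemma open_mixed_param_space: "open mixed_param_space"
  by (rule invariance_of_domain[OF continuous_on_mixed_param open_N inj_on_mixed_param])

lemma mixed_to_canon_in_N: "\<psi> \<in> mixed_param_space \<Longrightarrow> mixed_to_canon \<nu> \<psi> \<in> N"
  and mixed_param_mixed_to_canon: "\<psi> \<in> mixed_param_space \<Longrightarrow> mixed_param (mixed_to_canon \<nu> \<psi>) = \<psi>"
  by (auto simp: mixed_to_canon_mixed_param)

definition canon_jacobian :: "real^('p + 'q) \<Rightarrow> real^('p + 'q)^('p + 'q)" where
  "canon_jacobian \<psi> = matrix_inv (mixed_jacobian (var_matrix \<nu> (mixed_to_canon \<nu> \<psi>)))"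

lemma has_derivative_mixed_to_canon:
  assumes "\<psi> \<in> mixed_param_space"
  shows "(mixed_to_canon \<nu> has_derivative (\<lambda>h. canon_jacobian \<psi> *v h)) (at \<psi>)"
proof -
  define \<theta> where "\<theta> = mixed_to_canon \<nu> \<psi>"
  have "\<theta> \<in> N" and "mixed_param \<theta> = \<psi>"
    using assms by (simp_all add: \<theta>_def mixed_to_canon_in_N mixed_param_mixed_to_canon)
  interpret V: spd_block_matrix "var_matrix \<nu> \<theta>" by (rule spd_var_matrix[OF \<open>\<theta> \<in> N\<close>])
  have "(mixed_to_canon \<nu> has_derivative (\<lambda>h. canon_jacobian \<psi> *v h)) (at (mixed_param \<theta>))"
  proof (rule has_derivative_inverse_strong[OF open_N \<open>\<theta> \<in> N\<close>])
    show "continuous_on N mixed_param" by (rule continuous_on_mixed_param)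
    show "\<And>\<theta>'. \<theta>' \<in> N \<Longrightarrow> mixed_to_canon \<nu> (mixed_param \<theta>') = \<theta>'"
      by (rule mixed_to_canon_mixed_param)
    show "(mixed_param has_derivative (*v) (mixed_jacobian (var_matrix \<nu> \<theta>))) (at \<theta>)"
      by (rule has_derivative_mixed_param[OF \<open>\<theta> \<in> N\<close>])
    show "(*v) (mixed_jacobian (var_matrix \<nu> \<theta>)) \<circ> (\<lambda>h. canon_jacobian \<psi> *v h) = id"
      using matrix_inv_cancel(1)[OF V.invertible_mixed_jacobian]
      by (auto simp: canon_jacobian_def \<theta>_def)
  qed
  then show ?thesis using \<open>mixed_param \<theta> = \<psi>\<close> by simp
qed

lemma isCont_var_matrix_mixed_to_canon:
  "\<psi> \<in> mixed_param_space \<Longrightarrow> isCont (\<lambda>\<psi>. var_matrix \<nu> (mixed_to_canon \<nu> \<psi>)) \<psi>"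
  by (rule isCont_o2[OF has_derivative_continuous[OF has_derivative_mixed_to_canon]
        isCont_var_matrix[OF mixed_to_canon_in_N]])

lemma isCont_canon_jacobian:
  assumes "\<psi> \<in> mixed_param_space"
  shows "isCont canon_jacobian \<psi>"
proof -
  interpret V: spd_block_matrix "var_matrix \<nu> (mixed_to_canon \<nu> \<psi>)"
    by (rule spd_var_matrix[OF mixed_to_canon_in_N[OF assms]])
  have "((\<lambda>\<psi>. var_matrix \<nu> (mixed_to_canon \<nu> \<psi>)) \<longlongrightarrow> var_matrix \<nu> (mixed_to_canon \<nu> \<psi>)) (at \<psi>)"
    using isCont_var_matrix_mixed_to_canon[OF assms] by (simp add: isCont_def)
  then have "((\<lambda>\<psi>. mixed_jacobian (var_matrix \<nu> (mixed_to_canon \<nu> \<psi>)))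
      \<longlongrightarrow> mixed_jacobian (var_matrix \<nu> (mixed_to_canon \<nu> \<psi>))) (at \<psi>)"
    by (rule tendsto_mixed_jacobian)
  then show ?thesis
    unfolding isCont_def canon_jacobian_def
    by (rule tendsto_matrix_inv[OF _ V.invertible_mixed_jacobian])
qed

lemma has_derivative_loglik:
  "\<theta> \<in> N \<Longrightarrow> ((\<lambda>\<theta>. loglik \<nu> \<theta> t) has_derivative (\<lambda>h. (t - mean_param \<nu> \<theta>) \<bullet> h)) (at \<theta>)"
  unfolding loglik_def
  by (auto intro!: derivative_eq_intros has_derivative_cumulant
      simp: fun_eq_iff inner_diff_right inner_commute)

lemma has_derivative_dual_loglik_mean_param:
  assumes "\<theta> \<in> N"
  shows "((\<lambda>\<theta>. dual_loglik \<nu> \<theta>0 (mean_param \<nu> \<theta>)) has_derivative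
          (\<lambda>h. (\<theta>0 - \<theta>) \<bullet> (var_matrix \<nu> \<theta> *v h))) (at \<theta>)"
proof -
  have "((\<lambda>\<theta>. \<theta>0 \<bullet> mean_param \<nu> \<theta> - (\<theta> \<bullet> mean_param \<nu> \<theta> - cumulant \<nu> \<theta>)) has_derivative
      (\<lambda>h. \<theta>0 \<bullet> (var_matrix \<nu> \<theta> *v h) - ((\<theta> \<bullet> (var_matrix \<nu> \<theta> *v h) + h \<bullet> mean_param \<nu> \<theta>)
           - h \<bullet> mean_param \<nu> \<theta>))) (at \<theta>)"
    by (intro has_derivative_diff has_derivative_inner_right[OF has_derivative_mean_param[OF assms]]
        has_derivative_inner[OF has_derivative_ident has_derivative_mean_param[OF assms]]
        has_derivative_cumulant[OF assms])
  then have "((\<lambda>\<theta>. \<theta>0 \<bullet> mean_param \<nu> \<theta> - (\<theta> \<bullet> mean_param \<nu> \<theta> - cumulant \<nu> \<theta>)) has_derivative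
      (\<lambda>h. (\<theta>0 - \<theta>) \<bullet> (var_matrix \<nu> \<theta> *v h))) (at \<theta>)"
    by (simp add: inner_diff_left)
  then show ?thesis
    by (rule has_derivative_transform_within_open[OF _ open_N assms])
      (simp add: dual_loglik_def fenchel_conj_mean_param)
qed

lemma has_grad_hess_mixed_loglik:
  assumes \<theta>0: "\<theta>0 \<in> N"
  defines "J \<equiv> canon_jacobian (mixed_param \<theta>0)"
  shows "has_grad_hess (\<lambda>\<psi>. mixed_loglik \<nu> \<psi> (mean_param \<nu> \<theta>0)) (mixed_param \<theta>0) 0
           (- (transpose J ** var_matrix \<nu> \<theta>0 ** J))"
proof (rule has_grad_hess_critical_point[OF open_mixed_param_space imageI[OF \<theta>0],
      where B = canon_jacobian
      and w = "\<lambda>\<psi>. mean_param \<nu> \<theta>0 - mean_param \<nu> (mixed_to_canon \<nu> \<psi>)"])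
  show "((\<lambda>\<psi>. mixed_loglik \<nu> \<psi> (mean_param \<nu> \<theta>0)) has_derivative
      (\<lambda>h. ((mean_param \<nu> \<theta>0 - mean_param \<nu> (mixed_to_canon \<nu> \<psi>)) v* canon_jacobian \<psi>) \<bullet> h))
      (at \<psi>)"
    if "\<psi> \<in> mixed_param_space" for \<psi>
    using has_derivative_compose[OF has_derivative_mixed_to_canon[OF that]
        has_derivative_loglik[OF mixed_to_canon_in_N[OF that]]]
    by (simp add: mixed_loglik_def[abs_def] dot_lmul_matrix)
  show "((\<lambda>\<psi>. mean_param \<nu> \<theta>0 - mean_param \<nu> (mixed_to_canon \<nu> \<psi>)) has_derivative
      (\<lambda>h. 0 - var_matrix \<nu> \<theta>0 *v (J *v h))) (at (mixed_param \<theta>0))"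
    using has_derivative_compose[OF has_derivative_mixed_to_canon[OF imageI[OF \<theta>0]]
        has_derivative_mean_param[OF mixed_to_canon_in_N[OF imageI[OF \<theta>0]]]]
    by (intro has_derivative_diff has_derivative_const)
      (simp add: J_def mixed_to_canon_mixed_param[OF \<theta>0])
  show "mean_param \<nu> \<theta>0 - mean_param \<nu> (mixed_to_canon \<nu> (mixed_param \<theta>0)) = 0"
    using \<theta>0 by (simp add: mixed_to_canon_mixed_param)
  show "isCont canon_jacobian (mixed_param \<theta>0)"
    using \<theta>0 by (intro isCont_canon_jacobian) simp
  show "(0 - var_matrix \<nu> \<theta>0 *v (J *v h)) v* canon_jacobian (mixed_param \<theta>0)
      = (- (transpose J ** var_matrix \<nu> \<theta>0 ** J)) *v h" for h
    unfolding J_def transpose_matrix_vector[symmetric]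
    by (simp add: matrix_vector_mult_uminus_left matrix_vector_mult_uminus_right
        matrix_vector_mul_assoc matrix_mul_assoc del: transpose_matrix_vector)
qed

lemma has_grad_hess_mixed_dual_loglik:
  assumes \<theta>0: "\<theta>0 \<in> N"
  defines "J \<equiv> canon_jacobian (mixed_param \<theta>0)"
  shows "has_grad_hess (\<lambda>\<psi>. mixed_dual_loglik \<nu> \<psi> (mean_param \<nu> \<theta>0)) (mixed_param \<theta>0) 0
           (- (transpose J ** var_matrix \<nu> \<theta>0 ** J))"
proof (rule has_grad_hess_critical_point[OF open_mixed_param_space imageI[OF \<theta>0],
      where B = "\<lambda>\<psi>. var_matrix \<nu> (mixed_to_canon \<nu> \<psi>) ** canon_jacobian \<psi>"
      and w = "\<lambda>\<psi>. \<theta>0 - mixed_to_canon \<nu> \<psi>"])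
  show "((\<lambda>\<psi>. mixed_dual_loglik \<nu> \<psi> (mean_param \<nu> \<theta>0)) has_derivative
      (\<lambda>h. ((\<theta>0 - mixed_to_canon \<nu> \<psi>)
             v* (var_matrix \<nu> (mixed_to_canon \<nu> \<psi>) ** canon_jacobian \<psi>)) \<bullet> h)) (at \<psi>)"
    if "\<psi> \<in> mixed_param_space" for \<psi>
    using has_derivative_compose[OF has_derivative_mixed_to_canon[OF that]
        has_derivative_dual_loglik_mean_param[OF mixed_to_canon_in_N[OF that], of \<theta>0]]
    by (simp add: mixed_dual_loglik_def[abs_def] canon_of_mean_mean_param[OF \<theta>0] dot_lmul_matrix
        matrix_vector_mul_assoc)
  show "((\<lambda>\<psi>. \<theta>0 - mixed_to_canon \<nu> \<psi>) has_derivative (\<lambda>h. 0 - J *v h)) (at (mixed_param \<theta>0))"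
    using \<theta>0 unfolding J_def
    by (intro has_derivative_diff has_derivative_const has_derivative_mixed_to_canon) simp
  show "\<theta>0 - mixed_to_canon \<nu> (mixed_param \<theta>0) = 0"
    using \<theta>0 by (simp add: mixed_to_canon_mixed_param)
  show "isCont (\<lambda>\<psi>. var_matrix \<nu> (mixed_to_canon \<nu> \<psi>) ** canon_jacobian \<psi>) (mixed_param \<theta>0)"
    using isCont_var_matrix_mixed_to_canon isCont_canon_jacobian \<theta>0
    unfolding isCont_def by (intro tendsto_matrix_mult) simp_all
  show "(0 - J *v h)
        v* (var_matrix \<nu> (mixed_to_canon \<nu> (mixed_param \<theta>0)) ** canon_jacobian (mixed_param \<theta>0))
      = (- (transpose J ** var_matrix \<nu> \<theta>0 ** J)) *v h" for h
    unfolding J_def transpose_matrix_vector[symmetric]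
    by (simp add: mixed_to_canon_mixed_param \<theta>0 matrix_transpose_mul var_matrix_symmetric
        matrix_vector_mult_uminus_left matrix_vector_mult_uminus_right matrix_vector_mul_assoc
        matrix_mul_assoc del: transpose_matrix_vector)
qed

lemma hessian_eq_block_diag:
  assumes \<theta>0: "\<theta>0 \<in> N"
  defines "J \<equiv> canon_jacobian (mixed_param \<theta>0)" and "V \<equiv> var_matrix \<nu> \<theta>0"
  shows "transpose J ** V ** J
    = block_diag (matrix_inv (uu_block V)) (matrix_inv (vv_block (matrix_inv V)))"
proof -
  interpret V: spd_block_matrix V unfolding V_def by (rule spd_var_matrix[OF \<theta>0])
  show ?thesis
    using V.mixed_jacobian_congruence
    by (simp add: J_def V_def canon_jacobian_def mixed_to_canon_mixed_param[OF \<theta>0])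
qed

end

theorem lemmaA6:
  fixes \<nu> :: "(real^('p::finite + 'q::finite)) measure"
    and t :: "real^('p + 'q)"
  assumes "regular_ef \<nu>"
    and "minimal_ef \<nu>"
    and "t \<in> mean_space \<nu>"
  shows "let \<theta>bar = canon_of_mean \<nu> t;
             \<psi>bar = (\<chi> k. case k of Inl i \<Rightarrow> t $ Inl i | Inr j \<Rightarrow> \<theta>bar $ Inr j);
             V = var_matrix \<nu> \<theta>bar;
             H = - block_diag (matrix_inv (uu_block V)) (matrix_inv (vv_block (matrix_inv V)))
         in has_grad_hess (\<lambda>\<psi>. mixed_loglik \<nu> \<psi> t) \<psi>bar 0 H
          \<and> has_grad_hess (\<lambda>\<psi>. mixed_dual_loglik \<nu> \<psi> t) \<psi>bar 0 H"
proof -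
  interpret minimal_regular_ef_split \<nu> by unfold_locales (fact assms(1,2))+
  obtain \<theta>0 where \<theta>0: "\<theta>0 \<in> N" and t: "t = mean_param \<nu> \<theta>0"
    using assms(3) by (auto simp: mean_space_def)
  have canon: "canon_of_mean \<nu> t = \<theta>0"
    using canon_of_mean_mean_param[OF \<theta>0] by (simp add: t)
  have mixed: "(\<chi> k. case k of Inl i \<Rightarrow> t $ Inl i | Inr j \<Rightarrow> \<theta>0 $ Inr j) = mixed_param \<theta>0"
    unfolding t mixed_param_def by (rule refl)
  show ?thesis
    unfolding Let_def canon mixed
    using has_grad_hess_mixed_loglik[OF \<theta>0] has_grad_hess_mixed_dual_loglik[OF \<theta>0]
      hessian_eq_block_diag[OF \<theta>0]
    by (simp add: t)
qed

end
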